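(* Let $1<\alpha<2$ and let $\{G(n)\}$ satisfy conditions (A) and (PL) with this $\alpha$, slowly varying $L$ and $\varepsilon_0\in(0,1/2)$; let $\varepsilon_1\in(0,\varepsilon_0)$ and let $m=m(n)\to\infty$ be arbitrary. Then $$\omega(G_2)=|V_2|(1-o_P(1))=(1-o_P(1))(1-\alpha/2)^{-\alpha/2}K(n),$$ where $K(n)=L\big((n\ln n)^{1/2}\big)n^{1-\alpha/2}(\ln n)^{-\alpha/2}$.
   Context: Random intersection graph: given positive integers $n,m$ and a probability measure $P$ on $\{0,\dots,m\}$, $G(n,m,P)$ has vertex set $V=[n]$ and attribute set $W=\{w_1,\dots,w_m\}$; independent random subsets $S_1,\dots,S_n\subseteq W$ with $\mathbb P(S_v=S)=P(|S|)/\binom{m}{|S|}$; distinct $u,v$ adjacent iff $S_u\cap S_v\ne\emptyset$; $X_v=|S_v|$. For a sequence $G(n)=G(n,m(n),P(n))$, $X(n)$ has law $P(n)$ and $Y(n)=(n/m)^{1/2}X(n)$. Condition (A): $\mathbb E\,Y(n)=O(1)$. Condition (PL): for every sequence $x_n$ with $n^{1/2-\varepsilon_0}\le x_n\le n^{1/2+\varepsilon_0}$, $\mathbb P(Y(n)\ge x_n)\sim L(x_n)x_n^{-\alpha}$, where $L$ is slowly varying ($L(tx)/L(x)\to1$ as $x\to\infty$ for each $t>0$). Thresholds: $\theta_1=m^{1/2}n^{-\varepsilon_1}$, $\theta_2=\big((1-\alpha/2)m\ln n+m e_1\big)^{1/2}$ with $e_1=\max\{0,\ln L((n\ln n)^{1/2})\}$.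 $V_0=\{v: X_v<\theta_1\}$, $V_1=\{v:\theta_1\le X_v\le\theta_2\}$, $V_2=\{v: X_v>\theta_2\}$, and $G_i$ is the subgraph of $G(n)$ induced by $V_i$. *)

theory Defs
  imports "HOL-Probability.Probability" "HOL-Library.Landau_Symbols"
begin

text \<open>Law of a single random attribute set S_v on W = {1..m}: first draw its size k
  according to P, then a uniformly random k-subset of W. Hence
  P(S_v = S) = P(|S|) / (m choose |S|).\<close>
definition attr_pmf :: "nat \<Rightarrow> nat pmf \<Rightarrow> nat set pmf" where
  "attr_pmf m P = bind_pmf P (\<lambda>k. pmf_of_set {S. S \<subseteq> {1..m} \<and> card S = k})"

text \<open>The random intersection graph G(n,m,P): independent attribute sets S_1..S_n
  (the value outside [n] is the dummy empty set).\<close>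
definition RIG :: "nat \<Rightarrow> nat \<Rightarrow> nat pmf \<Rightarrow> (nat \<Rightarrow> nat set) pmf" where
  "RIG n m P = Pi_pmf {1..n} {} (\<lambda>_. attr_pmf m P)"

definition adj :: "(nat \<Rightarrow> nat set) \<Rightarrow> nat \<Rightarrow> nat \<Rightarrow> bool" where
  "adj S u v \<longleftrightarrow> u \<noteq> v \<and> S u \<inter> S v \<noteq> {}"

definition is_clique :: "(nat \<Rightarrow> nat set) \<Rightarrow> nat set \<Rightarrow> bool" where
  "is_clique S C \<longleftrightarrow> (\<forall>u\<in>C. \<forall>v\<in>C. u \<noteq> v \<longrightarrow> adj S u v)"

definition clique_number :: "(nat \<Rightarrow> nat set) \<Rightarrow> nat set \<Rightarrow> nat" where
  "clique_number S A = Max {card C | C. C \<subseteq> A \<and> is_clique S C}"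

definition slowly_varying :: "(real \<Rightarrow> real) \<Rightarrow> bool" where
  "slowly_varying L \<longleftrightarrow> (\<forall>t>0. ((\<lambda>x. L (t * x) / L x) \<longlongrightarrow> 1) at_top)"

definition theta2 :: "real \<Rightarrow> (real \<Rightarrow> real) \<Rightarrow> nat \<Rightarrow> nat \<Rightarrow> real" where
  "theta2 \<alpha> L n m = sqrt ((1 - \<alpha>/2) * real m * ln (real n)
      + real m * max 0 (ln (L (sqrt (real n * ln (real n))))))"

definition V2 :: "real \<Rightarrow> (real \<Rightarrow> real) \<Rightarrow> nat \<Rightarrow> nat \<Rightarrow> (nat \<Rightarrow> nat set) \<Rightarrow> nat set" where
  "V2 \<alpha> L n m S = {v \<in> {1..n}. real (card (S v)) > theta2 \<alpha> L n m}"

definition o_P :: "(nat \<Rightarrow> 'a pmf) \<Rightarrow> (nat \<Rightarrow> 'a \<Rightarrow> real) \<Rightarrow> bool" where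
  "o_P M \<xi> \<longleftrightarrow> (\<forall>\<epsilon>>0. ((\<lambda>n. measure_pmf.prob (M n) {\<omega>. \<bar>\<xi> n \<omega>\<bar> > \<epsilon>}) \<longlongrightarrow> 0) sequentially)"

definition K :: "real \<Rightarrow> (real \<Rightarrow> real) \<Rightarrow> nat \<Rightarrow> real" where
  "K \<alpha> L n = L (sqrt (real n * ln (real n))) * real n powr (1 - \<alpha>/2) * ln (real n) powr (- \<alpha>/2)"

end

theory Submission
  imports Defs "HOL-Real_Asymp.Real_Asymp"
begin

text \<open>Call a vertex heavy if it has more than \<open>\<theta>\<^sub>2\<close> attributes, let \<open>q\<close> be the probability of
  this and \<open>\<mu> = n q\<close>. On the scale \<open>sqrt (n ln n)\<close> of \<open>Y(n)\<close>, where \<open>\<theta>\<^sub>2\<close> lives, the tail of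
  \<open>Y(n)\<close> is given by (PL), and slow variation of \<open>L\<close> yields \<open>\<mu> \<sim> (1 - \<alpha>/2) powr (-\<alpha>/2) K(n) \<rightarrow> \<infinity>\<close>.
  As \<open>|V\<^sub>2|\<close> is binomial, Chebyshev's inequality gives \<open>|V\<^sub>2| = \<mu> (1 + o\<^sub>P(1))\<close>. Two independent
  heavy attribute sets are disjoint with probability at most \<open>exp (-\<theta>\<^sub>2\<^sup>2 / m)\<close>, so the expected number
  of non-adjacent pairs in \<open>V\<^sub>2\<close> is at most \<open>\<mu>\<^sup>2 exp (-\<theta>\<^sub>2\<^sup>2 / m) = o(\<mu>)\<close>. Deleting one end of every
  such pair leaves a clique, hence \<open>\<omega>(G\<^sub>2) \<ge> |V\<^sub>2| - o\<^sub>P(|V\<^sub>2|)\<close> by Markov's inequality.\<close>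

section \<open>Random subsets of a fixed size\<close>

lemma real_binomial_Suc_mult:
  "real (Suc k) * real (N choose Suc k) = (real N - real k) * real (N choose k)"
proof (cases "k \<le> N")
  case True
  have "Suc k * (N choose Suc k) = (N - k) * (N choose k)"
    by (metis binomial_absorption binomial_absorb_comp)
  then have "real (Suc k * (N choose Suc k)) = real ((N - k) * (N choose k))" by simp
  then show ?thesis using True by (simp add: of_nat_diff ring_distribs)
next
  case False
  then have "N choose k = 0" "N choose Suc k = 0" by auto
  then show ?thesis by (simp only: of_nat_0 mult_zero_right)
qed

lemma binomial_diff_le_power:
  assumes "a \<le> m" "0 < m"
  shows "real ((m - a) choose k) \<le> (1 - real a / real m) ^ k * real (m choose k)"
proof (induction k)
  case 0
  then show ?case by simp
next
  case (Suc k)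
  let ?r = "1 - real a / real m"
  have r: "0 \<le> ?r" using assms by (simp add: field_simps)
  show ?case
  proof (cases "k \<le> m - a")
    case True
    have "real (Suc k) * real ((m - a) choose Suc k) = (real (m - a) - real k) * real ((m - a) choose k)"
      by (rule real_binomial_Suc_mult)
    also have "\<dots> \<le> (real (m - a) - real k) * (?r ^ k * real (m choose k))"
      using True by (intro mult_left_mono[OF Suc]) simp
    also have "\<dots> \<le> (?r * (real m - real k)) * (?r ^ k * real (m choose k))"
      using assms True r by (intro mult_right_mono) (simp_all add: field_simps of_nat_diff)
    also have "\<dots> = ?r ^ Suc k * ((real m - real k) * real (m choose k))"
      by (simp add: mult_ac)
    also have "\<dots> = real (Suc k) * (?r ^ Suc k * real (m choose Suc k))"
      unfolding real_binomial_Suc_mult[symmetric] by (simp add: mult_ac)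
    finally show ?thesis by (simp only: mult_le_cancel_left_pos of_nat_0_less_iff zero_less_Suc)
  next
    case False
    then have z: "real ((m - a) choose Suc k) = 0" by simp
    show ?thesis unfolding z by (intro mult_nonneg_nonneg zero_le_power r of_nat_0_le_iff)
  qed
qed

definition ksubsets :: "nat \<Rightarrow> nat \<Rightarrow> nat set set" where
  "ksubsets m k = {S. S \<subseteq> {1..m} \<and> card S = k}"

lemma finite_ksubsets: "finite (ksubsets m k)"
  unfolding ksubsets_def by simp

lemma ksubsets_nonempty: "k \<le> m \<Longrightarrow> ksubsets m k \<noteq> {}"
  unfolding ksubsets_def by (auto intro!: exI[of _ "{1..k}"])

lemma card_ksubsets: "card (ksubsets m k) = m choose k"
  using n_subsets[of "{1..m}" k] by (simp add: ksubsets_def)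

lemma prob_disjoint_ksubset_le:
  assumes "A \<subseteq> {1..m}" "0 < m" "k \<le> m"
  shows "measure_pmf.prob (pmf_of_set (ksubsets m k)) {B. A \<inter> B = {}}
           \<le> exp (- real (card A) * real k / real m)"
proof -
  have finA: "finite A" using assms(1) finite_subset by blast
  have cA: "card A \<le> m" using card_mono[OF _ assms(1)] by simp
  have "ksubsets m k \<inter> {B. A \<inter> B = {}} = {B. B \<subseteq> {1..m} - A \<and> card B = k}"
    by (auto simp: ksubsets_def)
  then have c: "card (ksubsets m k \<inter> {B. A \<inter> B = {}}) = (m - card A) choose k"
    using n_subsets[of "{1..m} - A" k] assms(1) finA by (simp add: card_Diff_subset)
  have "measure_pmf.prob (pmf_of_set (ksubsets m k)) {B. A \<inter> B = {}}
      = real ((m - card A) choose k) / real (m choose k)"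
    using measure_pmf_of_set[OF ksubsets_nonempty[OF assms(3)] finite_ksubsets] c
    by (simp add: card_ksubsets)
  also have "\<dots> \<le> (1 - real (card A) / real m) ^ k"
    using binomial_diff_le_power[OF cA assms(2), of k] assms(3) by (simp add: divide_le_eq)
  also have "\<dots> \<le> exp (- (real (card A) / real m)) ^ k"
    using exp_ge_add_one_self[of "- (real (card A) / real m)"] cA assms(2)
    by (intro power_mono) (auto simp: field_simps)
  also have "\<dots> = exp (- real (card A) * real k / real m)"
    by (simp add: exp_of_nat_mult[symmetric] algebra_simps)
  finally show ?thesis .
qed

lemma attr_pmf_ksubsets: "attr_pmf m P = bind_pmf P (\<lambda>k. pmf_of_set (ksubsets m k))"
  by (simp add: attr_pmf_def ksubsets_def)

lemma set_attr_pmf_subset: "set_pmf P \<subseteq> {0..m} \<Longrightarrow> set_pmf (attr_pmf m P) \<subseteq> Pow {1..m}"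
  unfolding attr_pmf_ksubsets using ksubsets_nonempty finite_ksubsets
  by (auto simp: set_pmf_of_set subset_iff ksubsets_def)

lemma finite_set_attr_pmf: "set_pmf P \<subseteq> {0..m} \<Longrightarrow> finite (set_pmf (attr_pmf m P))"
  using set_attr_pmf_subset by (meson finite_Pow_iff finite_atLeastAtMost finite_subset)

lemma expectation_pmf_finite_support:
  fixes h :: "nat \<Rightarrow> real"
  assumes "set_pmf P \<subseteq> {0..m}"
  shows "measure_pmf.expectation P h = (\<Sum>k\<in>{0..m}. pmf P k * h k)"
  by (subst integral_measure_pmf_real[where A="{0..m}"]) (use assms in \<open>auto simp: mult.commute\<close>)

lemma expectation_attr_pmf:
  fixes h :: "nat set \<Rightarrow> real"
  assumes "set_pmf P \<subseteq> {0..m}"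
  shows "measure_pmf.expectation (attr_pmf m P) h
     = measure_pmf.expectation P (\<lambda>k. measure_pmf.expectation (pmf_of_set (ksubsets m k)) h)"
  unfolding attr_pmf_ksubsets expectation_pmf_finite_support[OF assms]
  by (subst pmf_expectation_bind[where A="{0..m}"])
     (use assms finite_ksubsets ksubsets_nonempty in \<open>auto simp: set_pmf_of_set\<close>)

lemma expectation_attr_pmf_card:
  fixes g :: "nat \<Rightarrow> real"
  assumes "set_pmf P \<subseteq> {0..m}"
  shows "measure_pmf.expectation (attr_pmf m P) (\<lambda>S. g (card S)) = measure_pmf.expectation P g"
proof -
  have "measure_pmf.expectation (pmf_of_set (ksubsets m k)) (\<lambda>S. g (card S)) = g k"
    if "k \<in> set_pmf P" for k
  proof -
    have "k \<le> m" using that assms by auto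
    then have "measure_pmf.expectation (pmf_of_set (ksubsets m k)) (\<lambda>S. g (card S))
        = measure_pmf.expectation (pmf_of_set (ksubsets m k)) (\<lambda>_. g k)"
      by (intro integral_cong_AE)
         (use finite_ksubsets ksubsets_nonempty in \<open>auto simp: AE_measure_pmf_iff ksubsets_def\<close>)
    then show ?thesis by simp
  qed
  then show ?thesis
    unfolding expectation_attr_pmf[OF assms] by (intro integral_cong_AE) (auto simp: AE_measure_pmf_iff)
qed

lemma expectation_attr_pmf_le:
  fixes f :: "nat set \<Rightarrow> real" and g :: "nat \<Rightarrow> real"
  assumes "set_pmf P \<subseteq> {0..m}"
    and "\<And>k. k \<le> m \<Longrightarrow> measure_pmf.expectation (pmf_of_set (ksubsets m k)) f \<le> g k"
  shows "measure_pmf.expectation (attr_pmf m P) f \<le> measure_pmf.expectation P g"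
  unfolding expectation_attr_pmf[OF assms(1)] expectation_pmf_finite_support[OF assms(1)]
  using assms(2) by (intro sum_mono mult_left_mono) auto

section \<open>Finite probability mass functions\<close>

lemma map_pmf_Pi_pmf_pair:
  assumes "finite A" "u \<in> A" "v \<in> A" "u \<noteq> v"
  shows "map_pmf (\<lambda>f. (f u, f v)) (Pi_pmf A d p) = pair_pmf (p u) (p v)"
proof -
  define A' where "A' = A - {u}"
  have A': "A = insert u A'" "finite A'" "u \<notin> A'" "v \<in> A'" using assms by (auto simp: A'_def)
  have "map_pmf (\<lambda>f. (f u, f v)) (Pi_pmf A d p)
      = map_pmf (\<lambda>f. (f u, f v)) (map_pmf (\<lambda>(y,f). f(u:=y)) (pair_pmf (p u) (Pi_pmf A' d p)))"
    unfolding A'(1) by (simp only: Pi_pmf_insert[OF A'(2,3)])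
  also have "\<dots> = map_pmf (apsnd (\<lambda>f. f v)) (pair_pmf (p u) (Pi_pmf A' d p))"
    using assms(4) by (simp add: pmf.map_comp o_def case_prod_unfold apsnd_def map_prod_def)
  also have "\<dots> = pair_pmf (p u) (map_pmf (\<lambda>f. f v) (Pi_pmf A' d p))"
    by (rule pair_map_pmf2[symmetric])
  also have "\<dots> = pair_pmf (p u) (p v)"
    using A' by (simp add: Pi_pmf_component)
  finally show ?thesis .
qed

lemma expectation_Pi_pmf_pair:
  fixes g :: "'b \<Rightarrow> 'b \<Rightarrow> real"
  assumes "finite A" "u \<in> A" "v \<in> A" "u \<noteq> v"
  shows "measure_pmf.expectation (Pi_pmf A d p) (\<lambda>f. g (f u) (f v))
       = measure_pmf.expectation (pair_pmf (p u) (p v)) (\<lambda>x. g (fst x) (snd x))"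
proof -
  have "measure_pmf.expectation (pair_pmf (p u) (p v)) (\<lambda>x. g (fst x) (snd x))
      = measure_pmf.expectation (map_pmf (\<lambda>f. (f u, f v)) (Pi_pmf A d p)) (\<lambda>x. g (fst x) (snd x))"
    by (simp only: map_pmf_Pi_pmf_pair[OF assms])
  then show ?thesis by simp
qed

lemma expectation_Pi_pmf_component:
  fixes g :: "'b \<Rightarrow> real"
  assumes "finite A" "u \<in> A"
  shows "measure_pmf.expectation (Pi_pmf A d p) (\<lambda>f. g (f u)) = measure_pmf.expectation (p u) g"
proof -
  have "measure_pmf.expectation (p u) g = measure_pmf.expectation (map_pmf (\<lambda>f. f u) (Pi_pmf A d p)) g"
    using assms by (simp add: Pi_pmf_component)
  then show ?thesis by simp
qed

lemma finite_set_Pi_pmf: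
  assumes "finite A" "\<And>i. i \<in> A \<Longrightarrow> finite (set_pmf (p i))"
  shows "finite (set_pmf (Pi_pmf A d p))"
  using finite_PiE_dflt[of A "set_pmf \<circ> p" d] assms by (simp add: set_Pi_pmf)

lemma expectation_pair_pmf_iterated:
  fixes F :: "'a \<times> 'b \<Rightarrow> real"
  assumes "finite (set_pmf p)" "finite (set_pmf q)"
  shows "measure_pmf.expectation (pair_pmf p q) F
       = measure_pmf.expectation p (\<lambda>a. measure_pmf.expectation q (\<lambda>b. F (a, b)))"
proof -
  have E: "\<And>M (f :: _ \<Rightarrow> real). finite (set_pmf M) \<Longrightarrow>
      measure_pmf.expectation M f = (\<Sum>x\<in>set_pmf M. f x * pmf M x)"
    by (rule integral_measure_pmf_real) auto
  have "measure_pmf.expectation (pair_pmf p q) F = (\<Sum>z\<in>set_pmf p \<times> set_pmf q. F z * pmf (pair_pmf p q) z)"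
    by (rule integral_measure_pmf_real) (use assms in auto)
  also have "\<dots> = (\<Sum>z\<in>set_pmf p \<times> set_pmf q. F z * (pmf p (fst z) * pmf q (snd z)))"
    by (intro sum.cong refl) (auto simp: pmf_pair)
  also have "\<dots> = (\<Sum>a\<in>set_pmf p. \<Sum>b\<in>set_pmf q. F (a,b) * (pmf p a * pmf q b))"
    by (subst sum.cartesian_product) (simp add: case_prod_beta)
  also have "\<dots> = (\<Sum>a\<in>set_pmf p. (\<Sum>b\<in>set_pmf q. F (a,b) * pmf q b) * pmf p a)"
    by (intro sum.cong refl) (simp add: sum_distrib_left sum_distrib_right mult_ac)
  finally show ?thesis by (simp add: E assms)
qed

lemma expectation_double_sum:
  fixes f :: "'i \<Rightarrow> 'j \<Rightarrow> 'a \<Rightarrow> real"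
  assumes "finite (set_pmf M)"
  shows "measure_pmf.expectation M (\<lambda>x. \<Sum>i\<in>A. \<Sum>j\<in>B. f i j x)
       = (\<Sum>i\<in>A. \<Sum>j\<in>B. measure_pmf.expectation M (f i j))"
proof -
  have E: "\<And>g. measure_pmf.expectation M g = (\<Sum>x\<in>set_pmf M. g x * pmf M x)"
    by (rule integral_measure_pmf_real) (use assms in auto)
  have "measure_pmf.expectation M (\<lambda>x. \<Sum>i\<in>A. \<Sum>j\<in>B. f i j x)
      = (\<Sum>x\<in>set_pmf M. \<Sum>i\<in>A. \<Sum>j\<in>B. f i j x * pmf M x)"
    by (simp add: E sum_distrib_right)
  also have "\<dots> = (\<Sum>i\<in>A. \<Sum>x\<in>set_pmf M. \<Sum>j\<in>B. f i j x * pmf M x)"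
    by (rule sum.swap)
  also have "\<dots> = (\<Sum>i\<in>A. \<Sum>j\<in>B. \<Sum>x\<in>set_pmf M. f i j x * pmf M x)"
    by (intro sum.cong refl) (rule sum.swap)
  finally show ?thesis by (simp add: E)
qed

lemma prob_eq_expectation_if:
  "measure_pmf.prob M E = measure_pmf.expectation M (\<lambda>x. if x \<in> E then 1 else 0)"
proof -
  have "measure_pmf.expectation M (\<lambda>x. if x \<in> E then 1 else 0) = measure_pmf.expectation M (indicator E)"
    by (intro Bochner_Integration.integral_cong) (auto simp: indicator_def)
  also have "\<dots> = measure_pmf.prob M E" by simp
  finally show ?thesis by simp
qed

lemma expectation_square_deviation:
  fixes f :: "'a \<Rightarrow> real"
  assumes "finite (set_pmf M)"
  shows "measure_pmf.expectation M (\<lambda>x. (f x - c)\<^sup>2)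
       = measure_pmf.expectation M (\<lambda>x. (f x)\<^sup>2) - 2 * c * measure_pmf.expectation M f + c\<^sup>2"
proof -
  have E: "\<And>g. measure_pmf.expectation M g = (\<Sum>x\<in>set_pmf M. g x * pmf M x)"
    by (rule integral_measure_pmf_real) (use assms in auto)
  have one: "(\<Sum>x\<in>set_pmf M. pmf M x) = 1" by (rule sum_pmf_eq_1) (use assms in auto)
  have "(\<Sum>x\<in>set_pmf M. (f x - c)\<^sup>2 * pmf M x)
      = (\<Sum>x\<in>set_pmf M. (f x)\<^sup>2 * pmf M x - 2 * c * (f x * pmf M x) + c\<^sup>2 * pmf M x)"
    by (intro sum.cong refl) (simp add: power2_diff algebra_simps)
  also have "\<dots> = (\<Sum>x\<in>set_pmf M. (f x)\<^sup>2 * pmf M x) - 2 * c * (\<Sum>x\<in>set_pmf M. f x * pmf M x)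
      + c\<^sup>2 * (\<Sum>x\<in>set_pmf M. pmf M x)"
    by (simp add: sum.distrib sum_subtractf sum_distrib_left)
  finally show ?thesis by (simp add: E one)
qed

lemma chebyshev_pmf:
  fixes f :: "'a \<Rightarrow> real"
  assumes "finite (set_pmf M)" "0 < a"
  shows "measure_pmf.prob M {x. a \<le> \<bar>f x - c\<bar>} \<le> measure_pmf.expectation M (\<lambda>x. (f x - c)\<^sup>2) / a\<^sup>2"
proof -
  have "measure_pmf.prob M {x \<in> space (measure_pmf M). a \<le> \<bar>f x - c\<bar>}
      \<le> measure_pmf.expectation M (\<lambda>x. (f x - c) ^ 2) / a\<^sup>2"
    by (rule measure_pmf.second_moment_method)
       (use assms in \<open>auto intro: integrable_measure_pmf_finite\<close>)
  then show ?thesis by simp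
qed

lemma markov_pmf:
  fixes f :: "'a \<Rightarrow> real"
  assumes "finite (set_pmf M)" "0 < a" "\<And>x. 0 \<le> f x"
  shows "measure_pmf.prob M {x. a \<le> f x} \<le> measure_pmf.expectation M f / a"
proof -
  have "measure_pmf.prob M {x \<in> space (measure_pmf M). a \<le> f x} \<le> measure_pmf.expectation M f / a"
    by (rule integral_Markov_inequality_measure[where A=UNIV])
       (use assms in \<open>auto intro: integrable_measure_pmf_finite\<close>)
  then show ?thesis by simp
qed

lemma o_PI:
  assumes "\<And>\<epsilon>. 0 < \<epsilon> \<Longrightarrow> \<exists>b. (b \<longlonglongrightarrow> 0) \<and>
             eventually (\<lambda>n. measure_pmf.prob (M n) {\<omega>. \<epsilon> < \<bar>\<xi> n \<omega>\<bar>} \<le> b n) sequentially"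
  shows "o_P M \<xi>"
  unfolding o_P_def
proof (intro allI impI)
  fix \<epsilon> :: real assume "0 < \<epsilon>"
  then obtain b where b: "b \<longlonglongrightarrow> 0"
    and le: "eventually (\<lambda>n. measure_pmf.prob (M n) {\<omega>. \<epsilon> < \<bar>\<xi> n \<omega>\<bar>} \<le> b n) sequentially"
    using assms by blast
  have ge: "eventually (\<lambda>n. 0 \<le> measure_pmf.prob (M n) {\<omega>. \<epsilon> < \<bar>\<xi> n \<omega>\<bar>}) sequentially"
    by simp
  show "(\<lambda>n. measure_pmf.prob (M n) {\<omega>. \<epsilon> < \<bar>\<xi> n \<omega>\<bar>}) \<longlonglongrightarrow> 0"
    by (rule tendsto_sandwich[OF ge le tendsto_const b])
qed

section \<open>Heavy vertices and their cliques\<close>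

definition heavy :: "real \<Rightarrow> nat set \<Rightarrow> real" where
  "heavy \<theta> S = (if \<theta> < real (card S) then 1 else 0)"

definition apart :: "nat set \<Rightarrow> nat set \<Rightarrow> real" where
  "apart A B = (if A \<inter> B = {} then 1 else 0)"

lemma expectation_ksubsets_card_mult:
  fixes h :: "nat \<Rightarrow> real"
  assumes "k \<le> m"
  shows "measure_pmf.expectation (pmf_of_set (ksubsets m k)) (\<lambda>S. h (card S) * g S)
       = h k * measure_pmf.expectation (pmf_of_set (ksubsets m k)) g"
proof -
  have "measure_pmf.expectation (pmf_of_set (ksubsets m k)) (\<lambda>S. h (card S) * g S)
      = measure_pmf.expectation (pmf_of_set (ksubsets m k)) (\<lambda>S. h k * g S)"
    by (intro integral_cong_AE)
       (use finite_ksubsets ksubsets_nonempty[OF assms] in \<open>auto simp: AE_measure_pmf_iff ksubsets_def\<close>)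
  then show ?thesis by simp
qed

lemma expectation_heavy:
  assumes "set_pmf P \<subseteq> {0..m}"
  shows "measure_pmf.expectation (attr_pmf m P) (heavy \<theta>) = measure_pmf.prob P {k. \<theta> < real k}"
  using expectation_attr_pmf_card[OF assms, of "\<lambda>k. if \<theta> < real k then 1 else 0"]
  by (simp add: heavy_def[abs_def] prob_eq_expectation_if)

lemma expectation_ksubsets_heavy_apart_le:
  assumes "0 < m" "k \<le> m" "0 \<le> \<theta>" "a \<subseteq> {1..m}" "\<theta> < real (card a)"
  shows "measure_pmf.expectation (pmf_of_set (ksubsets m k)) (\<lambda>b. heavy \<theta> b * apart a b)
      \<le> (if \<theta> < real k then 1 else 0) * exp (- \<theta>\<^sup>2 / real m)"
proof -
  have split: "measure_pmf.expectation (pmf_of_set (ksubsets m k)) (\<lambda>b. heavy \<theta> b * apart a b)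
      = (if \<theta> < real k then 1 else 0) * measure_pmf.expectation (pmf_of_set (ksubsets m k)) (apart a)"
    using expectation_ksubsets_card_mult[OF assms(2), of "\<lambda>c. if \<theta> < real c then 1 else 0" "apart a"]
    by (simp add: heavy_def[abs_def])
  show ?thesis
  proof (cases "\<theta> < real k")
    case True
    have "measure_pmf.expectation (pmf_of_set (ksubsets m k)) (apart a)
        = measure_pmf.prob (pmf_of_set (ksubsets m k)) {B. a \<inter> B = {}}"
      by (simp add: prob_eq_expectation_if apart_def[abs_def])
    also have "\<dots> \<le> exp (- real (card a) * real k / real m)"
      by (rule prob_disjoint_ksubset_le[OF assms(4,1,2)])
    also have "\<dots> \<le> exp (- \<theta>\<^sup>2 / real m)"
    proof -
      have "\<theta>\<^sup>2 \<le> real (card a) * real k"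
        unfolding power2_eq_square using True assms(3,5) by (intro mult_mono) auto
      then show ?thesis using assms(1) by (simp add: divide_right_mono)
    qed
    finally show ?thesis using True split by simp
  qed (use split in simp)
qed

lemma expectation_heavy_apart_le:
  assumes "set_pmf P \<subseteq> {0..m}" "0 < m" "0 \<le> \<theta>" "a \<subseteq> {1..m}" "\<theta> < real (card a)"
  shows "measure_pmf.expectation (attr_pmf m P) (\<lambda>b. heavy \<theta> b * apart a b)
      \<le> measure_pmf.prob P {k. \<theta> < real k} * exp (- \<theta>\<^sup>2 / real m)"
proof -
  have "measure_pmf.expectation (attr_pmf m P) (\<lambda>b. heavy \<theta> b * apart a b)
      \<le> measure_pmf.expectation P (\<lambda>k. (if \<theta> < real k then 1 else 0) * exp (- \<theta>\<^sup>2 / real m))"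
    using expectation_ksubsets_heavy_apart_le[OF assms(2) _ assms(3-5)]
    by (rule expectation_attr_pmf_le[OF assms(1)])
  then show ?thesis by (simp add: prob_eq_expectation_if)
qed

lemma expectation_pair_heavy:
  assumes "set_pmf P \<subseteq> {0..m}"
  shows "measure_pmf.expectation (pair_pmf (attr_pmf m P) (attr_pmf m P))
           (\<lambda>x. heavy \<theta> (fst x) * heavy \<theta> (snd x))
      = (measure_pmf.prob P {k. \<theta> < real k})\<^sup>2"
  using finite_set_attr_pmf[OF assms]
  by (simp add: expectation_pair_pmf_iterated expectation_heavy[OF assms] power2_eq_square)

lemma expectation_pair_heavy_apart_le:
  assumes "set_pmf P \<subseteq> {0..m}" "0 < m" "0 \<le> \<theta>"
  shows "measure_pmf.expectation (pair_pmf (attr_pmf m P) (attr_pmf m P))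
           (\<lambda>x. heavy \<theta> (fst x) * heavy \<theta> (snd x) * apart (fst x) (snd x))
      \<le> (measure_pmf.prob P {k. \<theta> < real k})\<^sup>2 * exp (- \<theta>\<^sup>2 / real m)"
proof -
  let ?A = "attr_pmf m P"
  let ?q = "measure_pmf.prob P {k. \<theta> < real k}"
  let ?e = "exp (- \<theta>\<^sup>2 / real m)"
  have fin: "finite (set_pmf ?A)" by (rule finite_set_attr_pmf[OF assms(1)])
  have inner: "measure_pmf.expectation ?A (\<lambda>b. heavy \<theta> a * heavy \<theta> b * apart a b) \<le> heavy \<theta> a * (?q * ?e)"
    if "a \<in> set_pmf ?A" for a
  proof (cases "\<theta> < real (card a)")
    case True
    have "a \<subseteq> {1..m}" using set_attr_pmf_subset[OF assms(1)] that by auto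
    with True show ?thesis
      using expectation_heavy_apart_le[OF assms] by (simp add: heavy_def[abs_def])
  qed (simp add: heavy_def)
  have "measure_pmf.expectation (pair_pmf ?A ?A) (\<lambda>x. heavy \<theta> (fst x) * heavy \<theta> (snd x) * apart (fst x) (snd x))
      = measure_pmf.expectation ?A (\<lambda>a. measure_pmf.expectation ?A (\<lambda>b. heavy \<theta> a * heavy \<theta> b * apart a b))"
    by (simp add: expectation_pair_pmf_iterated[OF fin fin])
  also have "\<dots> \<le> measure_pmf.expectation ?A (\<lambda>a. heavy \<theta> a * (?q * ?e))"
    using inner by (intro integral_mono_AE AE_pmfI) (auto intro: integrable_measure_pmf_finite[OF fin])
  also have "\<dots> = ?q\<^sup>2 * ?e"
    by (simp add: expectation_heavy[OF assms(1)] power2_eq_square)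
  finally show ?thesis .
qed

definition heavy_vertices :: "real \<Rightarrow> nat \<Rightarrow> (nat \<Rightarrow> nat set) \<Rightarrow> nat set" where
  "heavy_vertices \<theta> n S = {v \<in> {1..n}. \<theta> < real (card (S v))}"

definition disjoint_pairs :: "(nat \<Rightarrow> nat set) \<Rightarrow> nat set \<Rightarrow> (nat \<times> nat) set" where
  "disjoint_pairs S V = {(u, v). u \<in> V \<and> v \<in> V \<and> u < v \<and> S u \<inter> S v = {}}"

lemma finite_heavy_vertices: "finite (heavy_vertices \<theta> n S)"
  by (rule finite_subset[of _ "{1..n}"]) (auto simp: heavy_vertices_def)

lemma card_heavy_vertices: "real (card (heavy_vertices \<theta> n S)) = (\<Sum>v\<in>{1..n}. heavy \<theta> (S v))"
proof -
  have "(\<Sum>v\<in>{1..n}. heavy \<theta> (S v)) = (\<Sum>v\<in>{1..n}. of_bool (v \<in> heavy_vertices \<theta> n S))"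
    by (intro sum.cong refl) (auto simp: heavy_def heavy_vertices_def)
  also have "\<dots> = real (card ({1..n} \<inter> heavy_vertices \<theta> n S))"
    by simp
  also have "{1..n} \<inter> heavy_vertices \<theta> n S = heavy_vertices \<theta> n S"
    by (auto simp: heavy_vertices_def)
  finally show ?thesis by simp
qed

lemma card_disjoint_pairs_heavy_vertices:
  "real (card (disjoint_pairs S (heavy_vertices \<theta> n S))) =
     (\<Sum>u\<in>{1..n}. \<Sum>v\<in>{1..n}. if u < v then heavy \<theta> (S u) * heavy \<theta> (S v) * apart (S u) (S v) else 0)"
proof -
  let ?D = "disjoint_pairs S (heavy_vertices \<theta> n S)"
  have "(\<Sum>u\<in>{1..n}. \<Sum>v\<in>{1..n}. if u < v then heavy \<theta> (S u) * heavy \<theta> (S v) * apart (S u) (S v) else 0)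
      = (\<Sum>u\<in>{1..n}. \<Sum>v\<in>{1..n}. of_bool ((u, v) \<in> ?D))"
    by (intro sum.cong refl) (auto simp: heavy_def apart_def disjoint_pairs_def heavy_vertices_def)
  also have "\<dots> = (\<Sum>z\<in>{1..n} \<times> {1..n}. of_bool (z \<in> ?D))"
    by (subst sum.cartesian_product) (simp add: case_prod_beta)
  also have "\<dots> = real (card (({1..n} \<times> {1..n}) \<inter> ?D))"
    by simp
  also have "({1..n} \<times> {1..n}) \<inter> ?D = ?D"
    by (auto simp: heavy_vertices_def disjoint_pairs_def)
  finally show ?thesis by simp
qed

lemma clique_number_le_card:
  assumes "finite V"
  shows "clique_number S V \<le> card V"
proof -
  have "finite {card C | C. C \<subseteq> V \<and> is_clique S C}"
    using assms by (auto intro: finite_subset[of _ "card ` Pow V"])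
  moreover have "card {} \<in> {card C | C. C \<subseteq> V \<and> is_clique S C}"
    by (auto simp: is_clique_def intro!: exI[of _ "{}"])
  ultimately show ?thesis
    unfolding clique_number_def using assms by (subst Max_le_iff) (auto intro: card_mono)
qed

text \<open>Keeping only the vertices that meet every smaller vertex of \<open>V\<close> gives a clique; each discarded
  vertex is the larger end of a disjoint pair.\<close>

lemma card_le_clique_number_plus_disjoint_pairs:
  assumes "finite V"
  shows "card V \<le> clique_number S V + card (disjoint_pairs S V)"
proof -
  define C where "C = {v \<in> V. \<forall>u\<in>V. u < v \<longrightarrow> S u \<inter> S v \<noteq> {}}"
  have "is_clique S C"
    unfolding is_clique_def adj_def
  proof (intro ballI impI conjI)
    fix u v assume uv: "u \<in> C" "v \<in> C" "u \<noteq> v"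
    then show "u \<noteq> v" by simp
    from uv consider "u < v" | "v < u" by linarith
    then show "S u \<inter> S v \<noteq> {}"
      using uv by cases (auto simp: C_def)
  qed
  moreover have "finite {card C | C. C \<subseteq> V \<and> is_clique S C}"
    using assms by (auto intro: finite_subset[of _ "card ` Pow V"])
  ultimately have "card C \<le> clique_number S V"
    unfolding clique_number_def by (intro Max_ge) (auto simp: C_def)
  moreover have "card (V - C) \<le> card (disjoint_pairs S V)"
  proof -
    have "V - C \<subseteq> snd ` disjoint_pairs S V"
      by (force simp: C_def disjoint_pairs_def)
    moreover have "finite (disjoint_pairs S V)"
      using assms by (auto intro: finite_subset[of _ "V \<times> V"] simp: disjoint_pairs_def)
    ultimately show ?thesis
      by (meson card_image_le card_mono finite_imageI le_trans)
  qed
  moreover have "card V \<le> card C + card (V - C)"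
  proof -
    have "V = C \<union> (V - C)" by (auto simp: C_def)
    then show ?thesis by (metis card_Un_le)
  qed
  ultimately show ?thesis by linarith
qed

lemma finite_set_RIG: "set_pmf P \<subseteq> {0..m} \<Longrightarrow> finite (set_pmf (RIG n m P))"
  unfolding RIG_def by (rule finite_set_Pi_pmf) (simp_all add: finite_set_attr_pmf)

lemma expectation_card_heavy_vertices:
  assumes "set_pmf P \<subseteq> {0..m}"
  shows "measure_pmf.expectation (RIG n m P) (\<lambda>S. real (card (heavy_vertices \<theta> n S)))
     = real n * measure_pmf.prob P {k. \<theta> < real k}"
proof -
  have "measure_pmf.expectation (RIG n m P) (\<lambda>S. \<Sum>v\<in>{1..n}. heavy \<theta> (S v))
      = (\<Sum>v\<in>{1..n}. measure_pmf.expectation (attr_pmf m P) (heavy \<theta>))"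
    unfolding RIG_def
    by (rule expectation_sum_Pi_pmf) (auto intro: integrable_measure_pmf_finite finite_set_attr_pmf[OF assms])
  then show ?thesis by (simp add: card_heavy_vertices expectation_heavy[OF assms])
qed

lemma second_moment_card_heavy_vertices_le:
  fixes \<theta> :: real
  assumes "set_pmf P \<subseteq> {0..m}"
  defines "q \<equiv> measure_pmf.prob P {k. \<theta> < real k}"
  shows "measure_pmf.expectation (RIG n m P) (\<lambda>S. (real (card (heavy_vertices \<theta> n S)))\<^sup>2)
     \<le> real n * q + (real n * q)\<^sup>2"
proof -
  let ?R = "RIG n m P"
  have pair: "measure_pmf.expectation ?R (\<lambda>S. heavy \<theta> (S u) * heavy \<theta> (S v)) \<le> (if u = v then q else 0) + q\<^sup>2"
    if "u \<in> {1..n}" "v \<in> {1..n}" for u v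
  proof (cases "u = v")
    case True
    have idem: "\<And>x. heavy \<theta> x * heavy \<theta> x = heavy \<theta> x" by (simp add: heavy_def)
    have "measure_pmf.expectation ?R (\<lambda>S. heavy \<theta> (S u) * heavy \<theta> (S v))
        = measure_pmf.expectation ?R (\<lambda>S. heavy \<theta> (S u))"
      unfolding True idem ..
    also have "\<dots> = q"
      unfolding RIG_def q_def using that
      by (simp add: expectation_Pi_pmf_component expectation_heavy[OF assms(1)])
    finally show ?thesis using True by simp
  next
    case False
    have "measure_pmf.expectation ?R (\<lambda>S. heavy \<theta> (S u) * heavy \<theta> (S v))
        = measure_pmf.expectation (pair_pmf (attr_pmf m P) (attr_pmf m P)) (\<lambda>x. heavy \<theta> (fst x) * heavy \<theta> (snd x))"
      unfolding RIG_def
      by (rule expectation_Pi_pmf_pair[where g="\<lambda>a b. heavy \<theta> a * heavy \<theta> b"]) (use that False in auto)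
    also have "\<dots> = q\<^sup>2" unfolding q_def by (rule expectation_pair_heavy[OF assms(1)])
    finally show ?thesis using False by simp
  qed
  have "measure_pmf.expectation ?R (\<lambda>S. (real (card (heavy_vertices \<theta> n S)))\<^sup>2)
      = (\<Sum>u\<in>{1..n}. \<Sum>v\<in>{1..n}. measure_pmf.expectation ?R (\<lambda>S. heavy \<theta> (S u) * heavy \<theta> (S v)))"
    unfolding card_heavy_vertices power2_eq_square sum_product
    by (rule expectation_double_sum[OF finite_set_RIG[OF assms(1)]])
  also have "\<dots> \<le> (\<Sum>u\<in>{1..n}. \<Sum>v\<in>{1..n}. (if u = v then q else 0) + q\<^sup>2)"
    using pair by (intro sum_mono) auto
  also have "\<dots> = real n * q + (real n * q)\<^sup>2"
    by (simp add: sum.distrib power2_eq_square algebra_simps)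
  finally show ?thesis .
qed

lemma expectation_card_disjoint_pairs_le:
  fixes \<theta> :: real
  assumes "set_pmf P \<subseteq> {0..m}" "0 < m" "0 \<le> \<theta>"
  defines "q \<equiv> measure_pmf.prob P {k. \<theta> < real k}"
  shows "measure_pmf.expectation (RIG n m P) (\<lambda>S. real (card (disjoint_pairs S (heavy_vertices \<theta> n S))))
     \<le> (real n)\<^sup>2 * q\<^sup>2 * exp (- \<theta>\<^sup>2 / real m)"
proof -
  let ?R = "RIG n m P"
  let ?e = "exp (- \<theta>\<^sup>2 / real m)"
  have pair: "measure_pmf.expectation ?R
      (\<lambda>S. if u < v then heavy \<theta> (S u) * heavy \<theta> (S v) * apart (S u) (S v) else 0) \<le> q\<^sup>2 * ?e"
    if "u \<in> {1..n}" "v \<in> {1..n}" for u v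
  proof (cases "u < v")
    case True
    have "measure_pmf.expectation ?R (\<lambda>S. heavy \<theta> (S u) * heavy \<theta> (S v) * apart (S u) (S v))
        = measure_pmf.expectation (pair_pmf (attr_pmf m P) (attr_pmf m P))
           (\<lambda>x. heavy \<theta> (fst x) * heavy \<theta> (snd x) * apart (fst x) (snd x))"
      unfolding RIG_def
      by (rule expectation_Pi_pmf_pair[where g="\<lambda>a b. heavy \<theta> a * heavy \<theta> b * apart a b"])
         (use that True in auto)
    also have "\<dots> \<le> q\<^sup>2 * ?e" unfolding q_def by (rule expectation_pair_heavy_apart_le[OF assms(1-3)])
    finally show ?thesis using True by simp
  qed simp
  have "measure_pmf.expectation ?R (\<lambda>S. real (card (disjoint_pairs S (heavy_vertices \<theta> n S))))
      = (\<Sum>u\<in>{1..n}. \<Sum>v\<in>{1..n}. measure_pmf.expectation ?R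
          (\<lambda>S. if u < v then heavy \<theta> (S u) * heavy \<theta> (S v) * apart (S u) (S v) else 0))"
    unfolding card_disjoint_pairs_heavy_vertices
    by (rule expectation_double_sum[OF finite_set_RIG[OF assms(1)]])
  also have "\<dots> \<le> (\<Sum>u\<in>{1..n}. \<Sum>v\<in>{1..n}. q\<^sup>2 * ?e)"
    using pair by (intro sum_mono) auto
  also have "\<dots> = (real n)\<^sup>2 * q\<^sup>2 * ?e"
    by (simp add: power2_eq_square)
  finally show ?thesis .
qed

section \<open>Slowly varying functions\<close>

lemma eventually_ball_sequentially_of_selections:
  assumes ne: "\<And>n. R n \<noteq> {}"
    and sel: "\<And>x. (\<And>n. x n \<in> R n) \<Longrightarrow> eventually (\<lambda>n. Q n (x n)) sequentially"
  shows "eventually (\<lambda>n. \<forall>z\<in>R n. Q n z) sequentially"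
proof (rule ccontr)
  assume "\<not> ?thesis"
  then have fr: "frequently (\<lambda>n. \<exists>z\<in>R n. \<not> Q n z) sequentially"
    by (simp add: not_eventually)
  define x where "x n = (SOME z. z \<in> R n \<and> ((\<exists>z\<in>R n. \<not> Q n z) \<longrightarrow> \<not> Q n z))" for n
  have x: "x n \<in> R n \<and> ((\<exists>z\<in>R n. \<not> Q n z) \<longrightarrow> \<not> Q n (x n))" for n
    unfolding x_def by (rule someI_ex) (use ne[of n] in blast)
  have "eventually (\<lambda>n. Q n (x n)) sequentially" using sel x by blast
  moreover have "frequently (\<lambda>n. \<not> Q n (x n)) sequentially"
    by (rule frequently_elim1[OF fr]) (use x in blast)
  ultimately show False by (simp add: frequently_def)
qed

lemma asymp_equiv_uniform:
  fixes F :: "nat \<Rightarrow> real \<Rightarrow> real" and G :: "real \<Rightarrow> real"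
  assumes equiv: "\<And>x. (\<And>n. a n \<le> x n \<and> x n \<le> b n) \<Longrightarrow> (\<lambda>n. F n (x n)) \<sim>[sequentially] (\<lambda>n. G (x n))"
    and "\<And>n. a n \<le> b n" "c > 0"
  shows "eventually (\<lambda>n. \<forall>z\<in>{a n..b n}. \<bar>F n z - G z\<bar> \<le> c * \<bar>G z\<bar>) sequentially"
proof (rule eventually_ball_sequentially_of_selections)
  show "\<And>n. {a n..b n} \<noteq> {}" using assms(2) by simp
  fix x :: "nat \<Rightarrow> real" assume "\<And>n. x n \<in> {a n..b n}"
  then have "(\<lambda>n. F n (x n) - G (x n)) \<in> o[sequentially](\<lambda>n. G (x n))"
    by (intro asymp_equiv_imp_diff_smallo equiv) auto
  from landau_o.smallD[OF this assms(3)]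
  show "eventually (\<lambda>n. \<bar>F n (x n) - G (x n)\<bar> \<le> c * \<bar>G (x n)\<bar>) sequentially" by simp
qed

lemma ex_power2_bracket:
  fixes x :: real
  assumes "1 \<le> x"
  shows "\<exists>k::nat. 2 ^ k \<le> x \<and> x < 2 ^ Suc k"
proof -
  define k where "k = nat \<lfloor>log 2 x\<rfloor>"
  have "\<lfloor>log 2 x\<rfloor> = int k" using assms by (simp add: k_def)
  then have "2 powr real k \<le> x \<and> x < 2 powr (real k + 1)"
    using floor_log_eq_powr_iff[of x 2 "int k"] assms by simp
  moreover have "2 powr real k = 2 ^ k" "2 powr (real k + 1) = 2 ^ Suc k"
    using powr_realpow[of 2 k] powr_realpow[of 2 "Suc k"] by (simp_all add: add.commute)
  ultimately show ?thesis by auto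
qed

lemma power_bounds_of_doubling:
  fixes L :: "real \<Rightarrow> real"
  assumes "0 < d" "0 < z0" "0 < b"
    and step: "\<And>w. z0 \<le> w \<Longrightarrow> 0 < L w \<Longrightarrow> L (2 * w) \<le> 2 powr d * L w \<and> L w \<le> 2 powr d * L (2 * w)"
    and base: "\<And>z. z0 \<le> z \<Longrightarrow> z \<le> 2 * z0 \<Longrightarrow> b \<le> L z \<and> L z \<le> B"
    and w: "z0 \<le> w"
  shows "b * (w / z0) powr (- d) \<le> L w \<and> L w \<le> B * (w / z0) powr d"
proof -
  define r where "r = 2 powr d"
  have r: "1 < r" using assms(1) by (simp add: r_def)
  have iter: "b / r ^ k \<le> L (2 ^ k * z) \<and> L (2 ^ k * z) \<le> B * r ^ k"
    if z: "z0 \<le> z" "z \<le> 2 * z0" for k :: nat and z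
  proof (induction k)
    case 0
    then show ?case using base[OF z] by simp
  next
    case (Suc k)
    have "z0 \<le> 2 ^ k * z" using z assms(2) by (smt (verit) mult_le_cancel_right1 one_le_power)
    moreover have "0 < L (2 ^ k * z)" using Suc assms(3) r by (smt (verit) divide_pos_pos zero_less_power)
    ultimately have "L (2 * (2 ^ k * z)) \<le> r * L (2 ^ k * z) \<and> L (2 ^ k * z) \<le> r * L (2 * (2 ^ k * z))"
      unfolding r_def by (rule step)
    then have up: "L (2 ^ Suc k * z) \<le> r * L (2 ^ k * z)"
      and down: "L (2 ^ k * z) / r \<le> L (2 ^ Suc k * z)"
      using r by (auto simp: mult.assoc field_simps)
    have "r * L (2 ^ k * z) \<le> B * r ^ Suc k" using Suc r by (simp add: mult_ac)
    moreover have "b / r ^ Suc k \<le> L (2 ^ k * z) / r"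
      using Suc r by (simp add: divide_right_mono field_simps)
    ultimately show ?case using up down by linarith
  qed
  obtain k :: nat where k: "2 ^ k \<le> w / z0" "w / z0 < 2 ^ Suc k"
    using ex_power2_bracket[of "w / z0"] w assms(2) by auto
  define z where "z = w / 2 ^ k"
  have z: "z0 \<le> z" "z \<le> 2 * z0" using k assms(2) by (auto simp: z_def field_simps)
  have "r ^ k = (2 ^ k) powr d" by (simp add: r_def powr_realpow[symmetric] powr_powr mult.commute)
  then have rk: "r ^ k \<le> (w / z0) powr d" using k assms(1) by (auto intro: powr_mono2)
  have Lw: "b / r ^ k \<le> L w \<and> L w \<le> B * r ^ k" using iter[OF z, of k] by (simp add: z_def)
  have "0 \<le> B" using base[of z0] assms(2,3) by auto
  then have "L w \<le> B * (w / z0) powr d" using Lw rk by (meson mult_left_mono order_trans)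
  moreover have "b * (w / z0) powr (- d) \<le> b / r ^ k"
    using rk r assms(3) by (simp add: powr_minus divide_simps)
  ultimately show ?thesis using Lw by linarith
qed

lemma slowly_varying_powr_bounds:
  fixes L :: "real \<Rightarrow> real"
  assumes doubling: "((\<lambda>x. L (2 * x) / L x) \<longlongrightarrow> 1) at_top"
    and bounded: "\<And>Z. \<exists>z0\<ge>Z. \<exists>b B. 0 < b \<and> (\<forall>z. z0 \<le> z \<and> z \<le> 2 * z0 \<longrightarrow> b \<le> L z \<and> L z \<le> B)"
    and "0 < \<delta>"
  shows "eventually (\<lambda>z. z powr (- \<delta>) \<le> L z \<and> L z \<le> z powr \<delta>) at_top"
proof -
  define d where "d = \<delta> / 2"
  have d: "0 < d" using assms(3) by (simp add: d_def)
  define r where "r = 2 powr d"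
  have r: "1 < r" using d by (simp add: r_def)
  define e where "e = min (1 - 1 / r) (r - 1)"
  have e: "0 < e" using r by (auto simp: e_def field_simps)
  obtain Z1 where Z1: "\<And>x. x \<ge> Z1 \<Longrightarrow> \<bar>L (2 * x) / L x - 1\<bar> < e"
    using tendstoD[OF doubling e] by (auto simp: eventually_at_top_linorder dist_real_def)
  obtain z0 b B where z0: "z0 \<ge> max Z1 1" and b: "0 < b"
    and base: "\<And>z. z0 \<le> z \<Longrightarrow> z \<le> 2 * z0 \<Longrightarrow> b \<le> L z \<and> L z \<le> B"
    using bounded[of "max Z1 1"] by blast
  have step: "L (2 * w) \<le> r * L w \<and> L w \<le> r * L (2 * w)" if "z0 \<le> w" "0 < L w" for w
  proof -
    have "\<bar>L (2 * w) / L w - 1\<bar> < e" using Z1 that z0 by auto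
    then have "L (2 * w) / L w < r" "1 / r < L (2 * w) / L w" by (auto simp: e_def)
    then show ?thesis using that(2) r by (auto simp: field_simps)
  qed
  have z0_pos: "0 < z0" using z0 by simp
  have "eventually (\<lambda>w. w powr (- \<delta>) \<le> b * (w / z0) powr (- d)) at_top"
    using assms(3) b z0_pos unfolding d_def by real_asymp
  moreover have "eventually (\<lambda>w. B * (w / z0) powr d \<le> w powr \<delta>) at_top"
    using assms(3) z0_pos unfolding d_def by real_asymp
  moreover have "eventually (\<lambda>w. z0 \<le> w) at_top" by (rule eventually_ge_at_top)
  ultimately show ?thesis
  proof eventually_elim
    case (elim w)
    with power_bounds_of_doubling[OF d z0_pos b _ base, where w=w] step
    show ?case unfolding r_def by fastforce
  qed
qed

lemma doubling_interval_in_window: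
  fixes n :: nat and \<epsilon> z :: real
  assumes "0 < \<epsilon>" "1 \<le> n" "2 \<le> real n powr \<epsilon>" "sqrt (real n) \<le> z" "z \<le> 2 * sqrt (real n)"
  shows "real n powr (1/2 - \<epsilon>) \<le> z \<and> z \<le> real n powr (1/2 + \<epsilon>)"
proof
  have "real n powr (1/2 - \<epsilon>) \<le> real n powr (1/2)" using assms(1,2) by (intro powr_mono) auto
  then show "real n powr (1/2 - \<epsilon>) \<le> z" using assms(4) by (simp add: powr_half_sqrt)
  have "2 * sqrt (real n) \<le> real n powr \<epsilon> * real n powr (1/2)"
    using assms(3) by (simp add: powr_half_sqrt mult_right_mono)
  then show "z \<le> real n powr (1/2 + \<epsilon>)" using assms(5) by (simp add: powr_add mult.commute)
qed

lemma tendsto_sandwich_monotone_family: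
  fixes X :: "nat \<Rightarrow> real" and U :: "real \<Rightarrow> nat \<Rightarrow> real" and g :: "real \<Rightarrow> real"
  assumes "0 < t0" and cont: "isCont g t0"
    and between: "\<And>s1 s2. 0 < s1 \<Longrightarrow> s1 < t0 \<Longrightarrow> t0 < s2 \<Longrightarrow>
                    eventually (\<lambda>n. U s2 n \<le> X n \<and> X n \<le> U s1 n) sequentially"
    and lim: "\<And>s. 0 < s \<Longrightarrow> U s \<longlonglongrightarrow> g s"
  shows "X \<longlonglongrightarrow> g t0"
proof (rule tendstoI)
  fix \<epsilon> :: real assume "0 < \<epsilon>"
  then obtain d where d: "0 < d" "\<And>s. \<bar>s - t0\<bar> < d \<Longrightarrow> \<bar>g s - g t0\<bar> < \<epsilon> / 2"
    using cont by (metis continuous_at_eps_delta dist_real_def half_gt_zero)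
  define \<eta> where "\<eta> = min (d / 2) (t0 / 2)"
  have \<eta>: "0 < \<eta>" "\<eta> < d" "\<eta> < t0" using d assms(1) by (auto simp: \<eta>_def)
  have "eventually (\<lambda>n. dist (U (t0 - \<eta>) n) (g (t0 - \<eta>)) < \<epsilon> / 2) sequentially"
    using lim[of "t0 - \<eta>"] \<eta> \<open>0 < \<epsilon>\<close> by (intro tendstoD) auto
  moreover have "eventually (\<lambda>n. dist (U (t0 + \<eta>) n) (g (t0 + \<eta>)) < \<epsilon> / 2) sequentially"
    using lim[of "t0 + \<eta>"] \<eta> \<open>0 < \<epsilon>\<close> assms(1) by (intro tendstoD) auto
  moreover have "eventually (\<lambda>n. U (t0 + \<eta>) n \<le> X n \<and> X n \<le> U (t0 - \<eta>) n) sequentially"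
    using between \<eta> by simp
  ultimately show "eventually (\<lambda>n. dist (X n) (g t0) < \<epsilon>) sequentially"
  proof eventually_elim
    case (elim n)
    have "\<bar>g (t0 - \<eta>) - g t0\<bar> < \<epsilon> / 2" "\<bar>g (t0 + \<eta>) - g t0\<bar> < \<epsilon> / 2"
      using d(2)[of "t0 - \<eta>"] d(2)[of "t0 + \<eta>"] \<eta> by auto
    with elim show ?case unfolding dist_real_def abs_less_iff by linarith
  qed
qed

section \<open>Regularly varying attribute counts\<close>

locale power_law_rig =
  fixes \<alpha> \<epsilon>0 :: real and L :: "real \<Rightarrow> real" and m :: "nat \<Rightarrow> nat" and P :: "nat \<Rightarrow> nat pmf"
  assumes alpha: "1 < \<alpha>" "\<alpha> < 2"
    and eps0: "0 < \<epsilon>0" "\<epsilon>0 < 1/2"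
    and m_pos: "\<And>n. m n \<ge> 1"
    and P_supp: "\<And>n. set_pmf (P n) \<subseteq> {0..m n}"
    and L_sv: "slowly_varying L"
    and condPL: "\<And>x :: nat \<Rightarrow> real.
        (\<And>n. real n powr (1/2 - \<epsilon>0) \<le> x n \<and> x n \<le> real n powr (1/2 + \<epsilon>0)) \<Longrightarrow>
        (\<lambda>n. measure_pmf.prob (P n) {k. sqrt (real n / real (m n)) * real k \<ge> x n})
          \<sim>[sequentially] (\<lambda>n. L (x n) * x n powr (- \<alpha>))"
begin

text \<open>\<open>tail n z\<close> is \<open>P(Y(n) \<ge> z)\<close>.\<close>

definition tail :: "nat \<Rightarrow> real \<Rightarrow> real" where
  "tail n z = measure_pmf.prob (P n) {k. z \<le> sqrt (real n / real (m n)) * real k}"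

definition power_tail :: "real \<Rightarrow> real" where
  "power_tail z = L z * z powr (- \<alpha>)"

abbreviation window :: "nat \<Rightarrow> real set" where
  "window n \<equiv> {real n powr (1/2 - \<epsilon>0)..real n powr (1/2 + \<epsilon>0)}"

lemma tail_antimono: "z \<le> z' \<Longrightarrow> tail n z' \<le> tail n z"
  unfolding tail_def by (intro measure_pmf.finite_measure_mono) auto

lemma tail_nonneg: "0 \<le> tail n z"
  by (simp add: tail_def)

lemma tail_le_one: "tail n z \<le> 1"
  by (simp add: tail_def)

lemma window_bounds_le: "real n powr (1/2 - \<epsilon>0) \<le> real n powr (1/2 + \<epsilon>0)"
  by (cases "n = 0") (use eps0 in \<open>auto intro: powr_mono\<close>)

lemma tail_within_factor_two:
  "eventually (\<lambda>n. \<forall>z\<in>window n. 0 \<le> power_tail z \<and> power_tail z \<le> 2 * tail n z \<and> tail n z \<le> 2 * power_tail z)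
     sequentially"
proof -
  have close: "eventually (\<lambda>n. \<forall>z\<in>window n. \<bar>tail n z - power_tail z\<bar> \<le> 1/2 * \<bar>power_tail z\<bar>) sequentially"
    unfolding tail_def power_tail_def
    by (rule asymp_equiv_uniform[where F="\<lambda>n z. measure_pmf.prob (P n) {k. z \<le> sqrt (real n / real (m n)) * real k}"])
       (use condPL window_bounds_le in auto)
  have pointwise: "0 \<le> power_tail z \<and> power_tail z \<le> 2 * tail n z \<and> tail n z \<le> 2 * power_tail z"
    if "\<bar>tail n z - power_tail z\<bar> \<le> 1/2 * \<bar>power_tail z\<bar>" for n z
    using that tail_nonneg[of n z] by (cases "power_tail z \<ge> 0") (simp_all add: abs_if split: if_splits)
  show ?thesis
    by (rule eventually_mono[OF close]) (use pointwise in blast)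
qed

lemma L_ratio_tendsto: "0 < t \<Longrightarrow> ((\<lambda>x. L (t * x) / L x) \<longlongrightarrow> 1) at_top"
  using L_sv unfolding slowly_varying_def by blast

lemma L_eventually_nonzero: "eventually (\<lambda>z. L z \<noteq> 0) at_top"
proof -
  have "eventually (\<lambda>x. dist (L (1 * x) / L x) 1 < 1/2) at_top"
    using L_ratio_tendsto[of 1] by (rule tendstoD) simp_all
  then show ?thesis by (rule eventually_mono) (auto simp: dist_real_def)
qed

lemma L_eq_power_tail: "0 < z \<Longrightarrow> L z = power_tail z * z powr \<alpha>"
  by (simp add: power_tail_def mult.assoc powr_add[symmetric])

lemma L_bounds_from_tail_comparison:
  assumes z0: "0 < z0"
    and cmp: "\<And>z. z0 \<le> z \<Longrightarrow> z \<le> 2 * z0 \<Longrightarrow>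
                0 \<le> power_tail z \<and> power_tail z \<le> 2 * tail n z \<and> tail n z \<le> 2 * power_tail z"
    and z: "z0 \<le> z" "z \<le> 2 * z0"
  shows "power_tail (2 * z0) / 4 * z0 powr \<alpha> \<le> L z \<and> L z \<le> 2 * (2 * z0) powr \<alpha>"
proof
  have zpos: "0 < z" using z z0 by simp
  have f: "0 \<le> power_tail z" "power_tail z \<le> 2 * tail n z" "tail n z \<le> 2 * power_tail z"
    using cmp z by auto
  have "power_tail (2 * z0) / 4 \<le> power_tail z"
    using cmp[of "2 * z0"] f tail_antimono[of z "2 * z0" n] z z0 by auto
  moreover have "z0 powr \<alpha> \<le> z powr \<alpha>" using z z0 alpha by (intro powr_mono2) auto
  moreover have "0 \<le> power_tail (2 * z0)" using cmp[of "2 * z0"] z0 by auto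
  ultimately show "power_tail (2 * z0) / 4 * z0 powr \<alpha> \<le> L z"
    unfolding L_eq_power_tail[OF zpos] using z0 by (intro mult_mono) auto
  have "power_tail z \<le> 2" using f tail_le_one[of n z] by linarith
  moreover have "z powr \<alpha> \<le> (2 * z0) powr \<alpha>" using z zpos alpha by (intro powr_mono2) auto
  ultimately show "L z \<le> 2 * (2 * z0) powr \<alpha>"
    unfolding L_eq_power_tail[OF zpos] by (intro mult_mono) auto
qed

text \<open>As \<open>L z = power_tail z * z powr \<alpha>\<close> and \<open>power_tail\<close> is within a factor 2 of the
  probability \<open>tail n z \<in> [0, 1]\<close> on the window, (PL) bounds \<open>L\<close> above and below on whole doubling
  intervals: the local boundedness the Potter bounds need.\<close>

lemma L_bounded_on_doubling_interval:
  "\<exists>z0\<ge>Z. \<exists>b B. 0 < b \<and> (\<forall>z. z0 \<le> z \<and> z \<le> 2 * z0 \<longrightarrow> b \<le> L z \<and> L z \<le> B)"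
proof -
  obtain ZL where ZL: "\<And>z. z \<ge> ZL \<Longrightarrow> L z \<noteq> 0"
    using L_eventually_nonzero by (auto simp: eventually_at_top_linorder)
  have "eventually (\<lambda>n. 2 \<le> real n powr \<epsilon>0) sequentially" using eps0 by real_asymp
  moreover have "eventually (\<lambda>n::nat. max Z ZL \<le> sqrt (real n)) sequentially" by real_asymp
  moreover note tail_within_factor_two eventually_ge_at_top[of 1]
  ultimately have "eventually (\<lambda>n. 2 \<le> real n powr \<epsilon>0 \<and> max Z ZL \<le> sqrt (real n) \<and>
      (\<forall>z\<in>window n. 0 \<le> power_tail z \<and> power_tail z \<le> 2 * tail n z \<and> tail n z \<le> 2 * power_tail z)
      \<and> 1 \<le> n) sequentially"
    by eventually_elim blast
  then obtain n where n: "2 \<le> real n powr \<epsilon>0" "max Z ZL \<le> sqrt (real n)" "1 \<le> n"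
    and cmp: "\<forall>z\<in>window n. 0 \<le> power_tail z \<and> power_tail z \<le> 2 * tail n z \<and> tail n z \<le> 2 * power_tail z"
    by (auto simp: eventually_sequentially)
  define z0 where "z0 = sqrt (real n)"
  have z0: "0 < z0" using n(3) by (simp add: z0_def)
  have cmp': "0 \<le> power_tail z \<and> power_tail z \<le> 2 * tail n z \<and> tail n z \<le> 2 * power_tail z"
    if "z0 \<le> z" "z \<le> 2 * z0" for z
    using cmp doubling_interval_in_window[OF eps0(1) n(3,1)] that by (simp add: z0_def)
  have "ZL \<le> 2 * z0" using n(2) z0 unfolding z0_def by linarith
  then have "L (2 * z0) \<noteq> 0" using ZL by blast
  moreover have "0 \<le> power_tail (2 * z0)" using cmp'[of "2 * z0"] z0 by auto
  ultimately have "0 < power_tail (2 * z0)"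
    using z0 by (auto simp: power_tail_def order_le_less)
  then have "0 < power_tail (2 * z0) / 4 * z0 powr \<alpha>" using z0 by simp
  moreover have "Z \<le> z0" using n(2) by (simp add: z0_def)
  ultimately show ?thesis
    using L_bounds_from_tail_comparison[OF z0 cmp'] by blast
qed

lemma L_powr_bounds: "0 < \<delta> \<Longrightarrow> eventually (\<lambda>z. z powr (- \<delta>) \<le> L z \<and> L z \<le> z powr \<delta>) at_top"
  by (rule slowly_varying_powr_bounds[OF L_ratio_tendsto L_bounded_on_doubling_interval]) simp_all

lemma L_eventually_pos: "eventually (\<lambda>z. 0 < L z) at_top"
  using L_powr_bounds[OF zero_less_one] eventually_gt_at_top[of 0]
  by eventually_elim (smt (verit) powr_gt_zero)

definition sqrt_nlogn :: "nat \<Rightarrow> real" where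
  "sqrt_nlogn n = sqrt (real n * ln (real n))"

lemma sqrt_nlogn_tendsto: "filterlim sqrt_nlogn at_top sequentially"
  unfolding sqrt_nlogn_def by real_asymp

lemma eventually_at_sqrt_nlogn: "eventually Q at_top \<Longrightarrow> eventually (\<lambda>n. Q (sqrt_nlogn n)) sequentially"
  using sqrt_nlogn_tendsto by (simp add: filterlim_iff)

lemma L_sqrt_nlogn_pos: "eventually (\<lambda>n. 0 < L (sqrt_nlogn n)) sequentially"
  by (rule eventually_at_sqrt_nlogn[OF L_eventually_pos])

lemma K_pos: "eventually (\<lambda>n. 0 < K \<alpha> L n) sequentially"
  using L_sqrt_nlogn_pos eventually_ge_at_top[of 2]
  by eventually_elim (simp add: K_def sqrt_nlogn_def)

lemma n_power_tail_scaled: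
  assumes "0 < s" "2 \<le> n" "L (sqrt_nlogn n) \<noteq> 0"
  shows "real n * power_tail (s * sqrt_nlogn n)
       = s powr (- \<alpha>) * K \<alpha> L n * (L (s * sqrt_nlogn n) / L (sqrt_nlogn n))"
proof -
  have n: "2 \<le> real n" "0 < ln (real n)" using assms(2) by auto
  have "(s * sqrt_nlogn n) powr (- \<alpha>) = s powr (- \<alpha>) * (real n powr (- \<alpha> / 2) * ln (real n) powr (- \<alpha> / 2))"
    using assms(1) n by (simp add: sqrt_nlogn_def powr_mult powr_half_sqrt[symmetric] powr_powr)
  moreover have "real n * real n powr (- \<alpha> / 2) = real n powr (1 - \<alpha> / 2)"
    using n powr_add[of "real n" 1 "- \<alpha> / 2"] by simp
  ultimately show ?thesis
    using assms(3) by (simp add: power_tail_def K_def sqrt_nlogn_def[symmetric] field_simps)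
qed

lemma scaled_tail_ratio_tendsto:
  assumes s: "0 < s"
  shows "(\<lambda>n. real n * tail n (s * sqrt_nlogn n) / K \<alpha> L n) \<longlonglongrightarrow> s powr (- \<alpha>)"
proof -
  define x where "x n = max (real n powr (1/2 - \<epsilon>0)) (min (real n powr (1/2 + \<epsilon>0)) (s * sqrt_nlogn n))" for n
  have "eventually (\<lambda>n::nat. s * sqrt (real n * ln (real n)) \<le> real n powr (1/2 + \<epsilon>0)) sequentially"
    using s eps0 by real_asymp
  moreover have "eventually (\<lambda>n::nat. real n powr (1/2 - \<epsilon>0) \<le> s * sqrt (real n * ln (real n))) sequentially"
    using s eps0 by real_asymp
  ultimately have x_eq: "eventually (\<lambda>n. x n = s * sqrt_nlogn n) sequentially"
    by eventually_elim (auto simp: x_def sqrt_nlogn_def)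
  have "(\<lambda>n. tail n (x n)) \<sim>[sequentially] (\<lambda>n. power_tail (x n))"
    using condPL[of x] window_bounds_le by (simp add: x_def tail_def power_tail_def)
  then have "(\<lambda>n. tail n (s * sqrt_nlogn n)) \<sim>[sequentially] (\<lambda>n. power_tail (s * sqrt_nlogn n))"
    by (rule asymp_equiv_cong[THEN iffD1, rotated 2]) (use x_eq in \<open>auto elim: eventually_mono\<close>)
  then have "(\<lambda>n. real n * tail n (s * sqrt_nlogn n)) \<sim>[sequentially]
      (\<lambda>n. real n * power_tail (s * sqrt_nlogn n))"
    by (intro asymp_equiv_mult asymp_equiv_refl)
  also have "(\<lambda>n. real n * power_tail (s * sqrt_nlogn n)) \<sim>[sequentially] (\<lambda>n. s powr (- \<alpha>) * K \<alpha> L n)"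
  proof (rule asymp_equivI')
    have "(\<lambda>n. L (s * sqrt_nlogn n) / L (sqrt_nlogn n)) \<longlonglongrightarrow> 1"
      using filterlim_compose[OF L_ratio_tendsto[OF s] sqrt_nlogn_tendsto] by simp
    moreover have "eventually (\<lambda>n. L (s * sqrt_nlogn n) / L (sqrt_nlogn n)
        = real n * power_tail (s * sqrt_nlogn n) / (s powr (- \<alpha>) * K \<alpha> L n)) sequentially"
      using L_sqrt_nlogn_pos K_pos eventually_ge_at_top[of 2]
      by eventually_elim (use s in \<open>simp add: n_power_tail_scaled\<close>)
    ultimately show "(\<lambda>n. real n * power_tail (s * sqrt_nlogn n) / (s powr (- \<alpha>) * K \<alpha> L n)) \<longlonglongrightarrow> 1"
      by (rule Lim_transform_eventually)
  qed
  finally have "(\<lambda>n. real n * tail n (s * sqrt_nlogn n) / (s powr (- \<alpha>) * K \<alpha> L n)) \<longlonglongrightarrow> 1"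
    by (rule asymp_equivD_strong) (use K_pos s in \<open>auto elim: eventually_mono\<close>)
  then have "(\<lambda>n. s powr (- \<alpha>) * (real n * tail n (s * sqrt_nlogn n) / (s powr (- \<alpha>) * K \<alpha> L n)))
      \<longlonglongrightarrow> s powr (- \<alpha>) * 1"
    by (intro tendsto_mult tendsto_const)
  then show ?thesis using s by simp
qed

lemma K_tendsto: "filterlim (K \<alpha> L) at_top sequentially"
proof -
  define d where "d = 1 - \<alpha> / 2"
  have d: "0 < d" using alpha by (simp add: d_def)
  define lower where "lower n = sqrt (real n * ln (real n)) powr (- d) * real n powr (1 - \<alpha> / 2)
      * ln (real n) powr (- \<alpha> / 2)" for n :: nat
  have "filterlim (\<lambda>n::nat. real n powr (d / 2) * ln (real n) powr (- (d / 2 + \<alpha> / 2))) at_top sequentially"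
    using d alpha by real_asymp
  moreover have "eventually (\<lambda>n. real n powr (d / 2) * ln (real n) powr (- (d / 2 + \<alpha> / 2)) = lower n) sequentially"
    using eventually_ge_at_top[of 2]
  proof eventually_elim
    case (elim n)
    then have pos: "0 < real n" "0 < ln (real n)" by auto
    have "sqrt (real n * ln (real n)) powr (- d) = real n powr (- (d / 2)) * ln (real n) powr (- (d / 2))"
      using pos by (simp add: powr_half_sqrt[symmetric] powr_powr powr_mult)
    moreover have "real n powr (d / 2) = real n powr (- (d / 2)) * real n powr (1 - \<alpha> / 2)"
    proof -
      have "d / 2 = - (d / 2) + (1 - \<alpha> / 2)" by (simp add: d_def field_simps)
      then show ?thesis by (metis powr_add)
    qed
    moreover have "ln (real n) powr (- (d / 2 + \<alpha> / 2)) = ln (real n) powr (- (d / 2)) * ln (real n) powr (- \<alpha> / 2)"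
      using powr_add[of "ln (real n)" "- (d / 2)" "- \<alpha> / 2"] by simp
    ultimately show ?case by (simp add: lower_def mult_ac)
  qed
  ultimately have "filterlim lower at_top sequentially"
    by (rule filterlim_at_top_mono[OF _ eventually_mono]) simp
  moreover have "eventually (\<lambda>n. sqrt_nlogn n powr (- d) \<le> L (sqrt_nlogn n)) sequentially"
    using eventually_at_sqrt_nlogn[OF L_powr_bounds[OF d]] by (auto elim: eventually_mono)
  then have "eventually (\<lambda>n. lower n \<le> K \<alpha> L n) sequentially"
  proof eventually_elim
    case (elim n)
    then show ?case
      unfolding lower_def K_def sqrt_nlogn_def[symmetric] by (intro mult_right_mono) auto
  qed
  ultimately show ?thesis by (rule filterlim_at_top_mono)
qed

definition e1 :: "nat \<Rightarrow> real" where
  "e1 n = max 0 (ln (L (sqrt_nlogn n)))"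

text \<open>\<open>theta n\<close> is \<open>\<theta>\<^sub>2\<close>; \<open>\<theta>\<^sub>2\<^sup>2 = m \<tau>\<close>, and \<open>theta_Y n\<close> is \<open>\<theta>\<^sub>2\<close> on the scale of \<open>Y(n)\<close>.\<close>

definition tau :: "nat \<Rightarrow> real" where
  "tau n = (1 - \<alpha> / 2) * ln (real n) + e1 n"

definition theta :: "nat \<Rightarrow> real" where
  "theta n = theta2 \<alpha> L n (m n)"

definition theta_Y :: "nat \<Rightarrow> real" where
  "theta_Y n = sqrt (real n / real (m n)) * theta n"

definition q :: "nat \<Rightarrow> real" where
  "q n = measure_pmf.prob (P n) {k. theta n < real k}"

definition mu :: "nat \<Rightarrow> real" where
  "mu n = real n * q n"

definition t0 :: real where
  "t0 = sqrt (1 - \<alpha> / 2)"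

definition c0 :: real where
  "c0 = (1 - \<alpha> / 2) powr (- \<alpha> / 2)"

lemma t0_pos: "0 < t0"
  using alpha by (simp add: t0_def)

lemma c0_pos: "0 < c0"
  using alpha by (simp add: c0_def)

lemma c0_eq_t0_powr: "c0 = t0 powr (- \<alpha>)"
  using alpha by (simp add: c0_def t0_def powr_half_sqrt[symmetric] powr_powr)

lemma tau_nonneg: "1 \<le> n \<Longrightarrow> 0 \<le> tau n"
  using alpha by (simp add: tau_def e1_def)

lemma theta_eq: "theta n = sqrt (real (m n) * tau n)"
  unfolding theta_def theta2_def tau_def e1_def sqrt_nlogn_def
  by (rule arg_cong[where f=sqrt]) (simp only: distrib_left mult.commute mult.left_commute mult.assoc)

lemma theta_nonneg: "1 \<le> n \<Longrightarrow> 0 \<le> theta n"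
  using tau_nonneg[of n] by (simp add: theta_eq)

lemma theta_sq: "1 \<le> n \<Longrightarrow> (theta n)\<^sup>2 = real (m n) * tau n"
  using tau_nonneg[of n] by (simp add: theta_eq)

lemma theta_Y_eq: "1 \<le> n \<Longrightarrow> theta_Y n = sqrt (real n * tau n)"
  using m_pos[of n] by (simp add: theta_Y_def theta_eq real_sqrt_mult[symmetric])

lemma e1_over_ln_tendsto: "(\<lambda>n. e1 n / ln (real n)) \<longlonglongrightarrow> 0"
proof (rule tendstoI)
  fix \<epsilon> :: real assume \<epsilon>: "0 < \<epsilon>"
  have "eventually (\<lambda>n. L (sqrt_nlogn n) \<le> sqrt_nlogn n powr (\<epsilon> / 2)) sequentially"
    using eventually_at_sqrt_nlogn[OF L_powr_bounds[of "\<epsilon> / 2"]] \<epsilon> by (auto elim: eventually_mono)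
  then show "eventually (\<lambda>n. dist (e1 n / ln (real n)) 0 < \<epsilon>) sequentially"
    using L_sqrt_nlogn_pos eventually_ge_at_top[of 3]
  proof eventually_elim
    case (elim n)
    have "exp 1 \<le> real n" using exp_le elim by linarith
    then have ln1: "1 \<le> ln (real n)" using elim by (subst ln_ge_iff) auto
    have y: "0 < sqrt_nlogn n" using ln1 elim by (simp add: sqrt_nlogn_def)
    have "ln (sqrt_nlogn n) = (ln (real n) + ln (ln (real n))) / 2"
      using ln1 elim by (simp add: sqrt_nlogn_def ln_sqrt ln_mult)
    also have "\<dots> \<le> ln (real n)"
    proof -
      have "ln (ln (real n)) < ln (real n)" using ln1 by (intro ln_less_self) auto
      then show ?thesis by (simp add: field_simps)
    qed
    finally have "\<epsilon> / 2 * ln (sqrt_nlogn n) \<le> \<epsilon> / 2 * ln (real n)"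
      using \<epsilon> by (intro mult_left_mono) auto
    moreover have "ln (L (sqrt_nlogn n)) \<le> ln (sqrt_nlogn n powr (\<epsilon> / 2))"
      using elim y by (subst ln_le_cancel_iff) auto
    then have "ln (L (sqrt_nlogn n)) \<le> \<epsilon> / 2 * ln (sqrt_nlogn n)"
      using y by (simp add: ln_powr)
    ultimately have "ln (L (sqrt_nlogn n)) \<le> \<epsilon> / 2 * ln (real n)" by linarith
    moreover have "0 \<le> \<epsilon> / 2 * ln (real n)" using \<epsilon> ln1 by simp
    ultimately have "e1 n \<le> \<epsilon> / 2 * ln (real n)" unfolding e1_def by (rule max.boundedI[rotated])
    then have "e1 n / ln (real n) \<le> \<epsilon> / 2" using ln1 by (simp add: divide_le_eq)
    moreover have "0 \<le> e1 n / ln (real n)" using ln1 by (simp add: e1_def)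
    ultimately show ?case using \<epsilon> unfolding dist_real_def by linarith
  qed
qed

lemma theta_Y_ratio_tendsto: "(\<lambda>n. theta_Y n / sqrt_nlogn n) \<longlonglongrightarrow> t0"
proof -
  have "(\<lambda>n. sqrt ((1 - \<alpha> / 2) + e1 n / ln (real n))) \<longlonglongrightarrow> sqrt ((1 - \<alpha> / 2) + 0)"
    by (intro tendsto_real_sqrt tendsto_add tendsto_const e1_over_ln_tendsto)
  moreover have "eventually (\<lambda>n. sqrt ((1 - \<alpha> / 2) + e1 n / ln (real n)) = theta_Y n / sqrt_nlogn n) sequentially"
    using eventually_ge_at_top[of 2]
  proof eventually_elim
    case (elim n)
    then have "0 < ln (real n)" "0 < real n" by auto
    then have "(real n * tau n) / (real n * ln (real n)) = (1 - \<alpha> / 2) + e1 n / ln (real n)"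
      by (simp add: tau_def field_simps)
    then show ?case
      using elim by (simp add: theta_Y_eq sqrt_nlogn_def real_sqrt_divide[symmetric])
  qed
  ultimately show ?thesis by (simp add: t0_def Lim_transform_eventually)
qed

lemma q_between_tails:
  assumes "1 \<le> n"
  shows "s1 * sqrt_nlogn n \<le> theta_Y n \<Longrightarrow> q n \<le> tail n (s1 * sqrt_nlogn n)"
    and "theta_Y n < s2 * sqrt_nlogn n \<Longrightarrow> tail n (s2 * sqrt_nlogn n) \<le> q n"
proof -
  define c where "c = sqrt (real n / real (m n))"
  have c: "0 < c" using assms m_pos[of n] by (simp add: c_def)
  have "{k. theta n < real k} = {k. theta_Y n < c * real k}"
    using c by (auto simp: theta_Y_def c_def[symmetric])
  then have q: "q n = measure_pmf.prob (P n) {k. theta_Y n < c * real k}"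
    by (simp add: q_def)
  show "s1 * sqrt_nlogn n \<le> theta_Y n \<Longrightarrow> q n \<le> tail n (s1 * sqrt_nlogn n)"
    unfolding q tail_def c_def[symmetric] by (intro measure_pmf.finite_measure_mono) auto
  show "theta_Y n < s2 * sqrt_nlogn n \<Longrightarrow> tail n (s2 * sqrt_nlogn n) \<le> q n"
    unfolding q tail_def c_def[symmetric] by (intro measure_pmf.finite_measure_mono) auto
qed

text \<open>\<open>q n\<close> is sandwiched between the tails at \<open>s * sqrt_nlogn n\<close> for \<open>s\<close> on either side of
  \<open>t0 = lim theta_Y n / sqrt_nlogn n\<close>.\<close>

lemma mu_over_K_tendsto: "(\<lambda>n. mu n / K \<alpha> L n) \<longlonglongrightarrow> c0"
  unfolding c0_eq_t0_powr mu_def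
proof (rule tendsto_sandwich_monotone_family[OF t0_pos _ _ scaled_tail_ratio_tendsto])
  show "isCont (\<lambda>s. s powr (- \<alpha>)) t0" using t0_pos by (intro continuous_intros) auto
  fix s1 s2 assume s: "0 < s1" "s1 < t0" "t0 < s2"
  have "eventually (\<lambda>n. s1 < theta_Y n / sqrt_nlogn n \<and> theta_Y n / sqrt_nlogn n < s2) sequentially"
    using order_tendstoD[OF theta_Y_ratio_tendsto] s by (simp add: eventually_conj_iff)
  then show "eventually (\<lambda>n. real n * tail n (s2 * sqrt_nlogn n) / K \<alpha> L n \<le> real n * q n / K \<alpha> L n
      \<and> real n * q n / K \<alpha> L n \<le> real n * tail n (s1 * sqrt_nlogn n) / K \<alpha> L n) sequentially"
    using K_pos eventually_ge_at_top[of 2]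
  proof eventually_elim
    case (elim n)
    then have y: "0 < sqrt_nlogn n" by (simp add: sqrt_nlogn_def)
    have "s1 * sqrt_nlogn n \<le> theta_Y n" "theta_Y n < s2 * sqrt_nlogn n"
      using elim y by (simp_all add: field_simps)
    then have "q n \<le> tail n (s1 * sqrt_nlogn n)" "tail n (s2 * sqrt_nlogn n) \<le> q n"
      using q_between_tails[of n] elim by auto
    then show ?case using elim by (auto intro!: divide_right_mono mult_left_mono)
  qed
qed

lemma mu_ratio_tendsto: "(\<lambda>n. mu n / (c0 * K \<alpha> L n)) \<longlonglongrightarrow> 1"
proof -
  have "(\<lambda>n. mu n / K \<alpha> L n / c0) \<longlonglongrightarrow> c0 / c0"
    by (intro tendsto_divide mu_over_K_tendsto tendsto_const) (use c0_pos in simp)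
  then show ?thesis using c0_pos by (simp add: field_simps)
qed

lemma mu_tendsto: "filterlim mu at_top sequentially"
proof -
  have "filterlim (\<lambda>n. mu n / K \<alpha> L n * K \<alpha> L n) at_top sequentially"
    by (rule filterlim_tendsto_pos_mult_at_top[OF mu_over_K_tendsto c0_pos K_tendsto])
  moreover have "eventually (\<lambda>n. mu n / K \<alpha> L n * K \<alpha> L n = mu n) sequentially"
    using K_pos by eventually_elim simp
  ultimately show ?thesis
    by (rule filterlim_at_top_mono[OF _ eventually_mono]) simp
qed

text \<open>This is what \<open>e\<^sub>1\<close> in \<open>\<theta>\<^sub>2\<close> is for: it absorbs the factor \<open>L (sqrt_nlogn n)\<close> of \<open>K(n)\<close>.\<close>

lemma K_exp_theta_le:
  assumes "2 \<le> n" "0 < L (sqrt_nlogn n)"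
  shows "K \<alpha> L n * exp (- (theta n)\<^sup>2 / real (m n)) \<le> ln (real n) powr (- \<alpha> / 2)"
proof -
  have n: "0 < real n" "1 \<le> n" using assms(1) by auto
  have "exp (- (theta n)\<^sup>2 / real (m n)) = exp (- tau n)"
    using theta_sq[OF n(2)] m_pos[of n] by simp
  also have "\<dots> = real n powr (- (1 - \<alpha> / 2)) * exp (- e1 n)"
    using n by (simp add: tau_def exp_add[symmetric] powr_def algebra_simps)
  finally have "K \<alpha> L n * exp (- (theta n)\<^sup>2 / real (m n))
      = (L (sqrt_nlogn n) * exp (- e1 n)) * ln (real n) powr (- \<alpha> / 2)"
    using n by (simp add: K_def sqrt_nlogn_def[symmetric] powr_minus field_simps)
  moreover have L_e1: "L (sqrt_nlogn n) * exp (- e1 n) \<le> 1"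
  proof -
    have "L (sqrt_nlogn n) = exp (ln (L (sqrt_nlogn n)))" using assms(2) by simp
    also have "\<dots> \<le> exp (e1 n)" by (simp add: e1_def)
    finally show ?thesis by (simp add: exp_minus field_simps)
  qed
  ultimately show ?thesis
    using mult_right_mono[OF L_e1, of "ln (real n) powr (- \<alpha> / 2)"] by simp
qed

lemma mu_exp_theta_tendsto: "(\<lambda>n. mu n * exp (- (theta n)\<^sup>2 / real (m n))) \<longlonglongrightarrow> 0"
proof (rule tendsto_sandwich[of "\<lambda>_. 0"])
  show "eventually (\<lambda>n. 0 \<le> mu n * exp (- (theta n)\<^sup>2 / real (m n))) sequentially"
    by (simp add: mu_def q_def)
  have "(\<lambda>n. mu n / K \<alpha> L n * ln (real n) powr (- \<alpha> / 2)) \<longlonglongrightarrow> c0 * 0"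
    by (intro tendsto_mult mu_over_K_tendsto) (use alpha in real_asymp)
  then show "(\<lambda>n. mu n / K \<alpha> L n * ln (real n) powr (- \<alpha> / 2)) \<longlonglongrightarrow> 0" by simp
  show "eventually (\<lambda>n. mu n * exp (- (theta n)\<^sup>2 / real (m n))
      \<le> mu n / K \<alpha> L n * ln (real n) powr (- \<alpha> / 2)) sequentially"
    using K_pos L_sqrt_nlogn_pos eventually_ge_at_top[of 2]
  proof eventually_elim
    case (elim n)
    have "0 \<le> mu n / K \<alpha> L n" using elim by (simp add: mu_def q_def)
    then have "mu n / K \<alpha> L n * (K \<alpha> L n * exp (- (theta n)\<^sup>2 / real (m n)))
        \<le> mu n / K \<alpha> L n * ln (real n) powr (- \<alpha> / 2)"
      using K_exp_theta_le elim by (intro mult_left_mono) auto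
    then show ?case using elim by simp
  qed
qed simp
end

section \<open>Concentration\<close>

lemma relative_deviation_transfer:
  fixes X \<mu> D \<epsilon> :: real
  assumes "0 < D" "\<bar>\<mu> / D - 1\<bar> < \<epsilon> / 2" "\<epsilon> \<le> 1" "\<epsilon> < \<bar>1 - X / D\<bar>"
  shows "\<epsilon> * \<mu> / 4 \<le> \<bar>X - \<mu>\<bar>"
proof -
  have "\<mu> / D - 1 = (\<mu> - D) / D" "1 - X / D = (D - X) / D"
    using assms(1) by (simp_all add: diff_divide_distrib)
  then have "\<bar>\<mu> - D\<bar> < \<epsilon> / 2 * D" "\<epsilon> * D < \<bar>D - X\<bar>"
    using assms(1,2,4) by (simp_all add: abs_divide pos_divide_less_eq pos_less_divide_eq)
  moreover have "\<epsilon> * \<mu> \<le> \<epsilon> * (2 * D)"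
  proof (rule mult_left_mono)
    have "\<epsilon> * D \<le> D" using mult_right_mono[OF assms(3), of D] assms(1) by simp
    then show "\<mu> \<le> 2 * D" using \<open>\<bar>\<mu> - D\<bar> < \<epsilon> / 2 * D\<close> unfolding abs_less_iff by linarith
    show "0 \<le> \<epsilon>" using assms(2) abs_ge_zero[of "\<mu> / D - 1"] by linarith
  qed
  ultimately show ?thesis unfolding abs_less_iff abs_le_iff by linarith
qed

lemma relative_clique_gap_le:
  fixes X N w \<mu> \<epsilon> :: real
  assumes "X - N \<le> w" "w \<le> X" "\<mu> / 2 < X" "N < \<epsilon> * \<mu> / 2" "0 < \<epsilon>" "0 < \<mu>"
  shows "\<bar>1 - w / X\<bar> \<le> \<epsilon>"
proof -
  have X: "0 < X" using assms(3,6) by linarith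
  have "\<epsilon> * \<mu> / 2 < \<epsilon> * X" using assms(3,5) by simp
  then have "X - w \<le> \<epsilon> * X" using assms(1,4) by linarith
  then show ?thesis using X assms(2) by (simp add: abs_le_iff divide_simps)
qed

context power_law_rig
begin

lemma V2_eq_heavy_vertices: "V2 \<alpha> L n (m n) S = heavy_vertices (theta n) n S"
  by (simp add: V2_def heavy_vertices_def theta_def)

lemma chebyshev_card_V2:
  assumes "0 < a"
  shows "measure_pmf.prob (RIG n (m n) (P n)) {S. a \<le> \<bar>real (card (V2 \<alpha> L n (m n) S)) - mu n\<bar>}
    \<le> mu n / a\<^sup>2"
proof -
  let ?R = "RIG n (m n) (P n)"
  let ?X = "\<lambda>S. real (card (heavy_vertices (theta n) n S))"
  have fin: "finite (set_pmf ?R)" by (rule finite_set_RIG[OF P_supp])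
  have "measure_pmf.expectation ?R (\<lambda>S. (?X S - mu n)\<^sup>2)
      = measure_pmf.expectation ?R (\<lambda>S. (?X S)\<^sup>2) - 2 * mu n * measure_pmf.expectation ?R ?X + (mu n)\<^sup>2"
    by (rule expectation_square_deviation[OF fin])
  also have "measure_pmf.expectation ?R ?X = mu n"
    unfolding mu_def q_def by (rule expectation_card_heavy_vertices[OF P_supp])
  also have "measure_pmf.expectation ?R (\<lambda>S. (?X S)\<^sup>2) \<le> mu n + (mu n)\<^sup>2"
    unfolding mu_def q_def by (rule second_moment_card_heavy_vertices_le[OF P_supp])
  finally have "measure_pmf.expectation ?R (\<lambda>S. (?X S - mu n)\<^sup>2) \<le> mu n"
    by (simp add: power2_eq_square)
  then show ?thesis
    unfolding V2_eq_heavy_vertices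
    using chebyshev_pmf[OF fin assms, of ?X "mu n"] assms by (simp add: divide_right_mono order_trans)
qed

lemma markov_disjoint_pairs_V2:
  assumes "0 < a" "1 \<le> n"
  shows "measure_pmf.prob (RIG n (m n) (P n)) {S. a \<le> real (card (disjoint_pairs S (V2 \<alpha> L n (m n) S)))}
    \<le> (mu n)\<^sup>2 * exp (- (theta n)\<^sup>2 / real (m n)) / a"
proof -
  let ?R = "RIG n (m n) (P n)"
  let ?N = "\<lambda>S. real (card (disjoint_pairs S (heavy_vertices (theta n) n S)))"
  have "measure_pmf.prob ?R {S. a \<le> ?N S} \<le> measure_pmf.expectation ?R ?N / a"
    by (rule markov_pmf[OF finite_set_RIG[OF P_supp] assms(1)]) simp
  also have "measure_pmf.expectation ?R ?N \<le> (real n)\<^sup>2 * (q n)\<^sup>2 * exp (- (theta n)\<^sup>2 / real (m n))"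
    unfolding q_def
    by (rule expectation_card_disjoint_pairs_le[OF P_supp _ theta_nonneg[OF assms(2)]]) (use m_pos[of n] in simp)
  finally show ?thesis
    unfolding V2_eq_heavy_vertices using assms(1) by (simp add: divide_right_mono mu_def power_mult_distrib)
qed

text \<open>\<open>|V\<^sub>2|\<close> concentrates around \<open>\<mu>\<close> by Chebyshev, since its variance is at most \<open>\<mu> \<rightarrow> \<infinity>\<close>.\<close>

lemma card_V2_asymp:
  "\<exists>\<xi>. o_P (\<lambda>n. RIG n (m n) (P n)) \<xi> \<and>
     (\<forall>\<^sub>F n in sequentially. \<forall>S \<in> set_pmf (RIG n (m n) (P n)).
        real (card (V2 \<alpha> L n (m n) S)) = (1 - \<xi> n S) * (1 - \<alpha>/2) powr (- \<alpha>/2) * K \<alpha> L n)"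
proof (intro exI conjI)
  define \<xi> where "\<xi> n S = 1 - real (card (V2 \<alpha> L n (m n) S)) / (c0 * K \<alpha> L n)" for n S
  show "\<forall>\<^sub>F n in sequentially. \<forall>S \<in> set_pmf (RIG n (m n) (P n)).
      real (card (V2 \<alpha> L n (m n) S)) = (1 - \<xi> n S) * (1 - \<alpha>/2) powr (- \<alpha>/2) * K \<alpha> L n"
    using K_pos by eventually_elim (use c0_pos in \<open>auto simp: \<xi>_def c0_def\<close>)
  show "o_P (\<lambda>n. RIG n (m n) (P n)) \<xi>"
  proof (rule o_PI)
    fix \<epsilon> :: real assume "0 < \<epsilon>"
    define \<epsilon>' where "\<epsilon>' = min \<epsilon> 1"
    have \<epsilon>': "0 < \<epsilon>'" "\<epsilon>' \<le> \<epsilon>" "\<epsilon>' \<le> 1" using \<open>0 < \<epsilon>\<close> by (auto simp: \<epsilon>'_def)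
    have "(\<lambda>n. 16 / \<epsilon>'\<^sup>2 * inverse (mu n)) \<longlonglongrightarrow> 16 / \<epsilon>'\<^sup>2 * 0"
      by (intro tendsto_mult tendsto_const tendsto_inverse_0_at_top mu_tendsto)
    moreover have "eventually (\<lambda>n. \<bar>mu n / (c0 * K \<alpha> L n) - 1\<bar> < \<epsilon>' / 2) sequentially"
      using tendstoD[OF mu_ratio_tendsto, of "\<epsilon>' / 2"] \<epsilon>' by (simp add: dist_real_def)
    then have "eventually (\<lambda>n. measure_pmf.prob (RIG n (m n) (P n)) {\<omega>. \<epsilon> < \<bar>\<xi> n \<omega>\<bar>}
        \<le> 16 / \<epsilon>'\<^sup>2 * inverse (mu n)) sequentially"
      using K_pos mu_tendsto[unfolded filterlim_at_top, rule_format, of 1]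
    proof eventually_elim
      case (elim n)
      have "{\<omega>. \<epsilon> < \<bar>\<xi> n \<omega>\<bar>} \<subseteq> {S. \<epsilon>' * mu n / 4 \<le> \<bar>real (card (V2 \<alpha> L n (m n) S)) - mu n\<bar>}"
        using relative_deviation_transfer[of "c0 * K \<alpha> L n" "mu n" \<epsilon>'] elim \<epsilon>' c0_pos
        by (auto simp: \<xi>_def)
      then have "measure_pmf.prob (RIG n (m n) (P n)) {\<omega>. \<epsilon> < \<bar>\<xi> n \<omega>\<bar>}
          \<le> measure_pmf.prob (RIG n (m n) (P n)) {S. \<epsilon>' * mu n / 4 \<le> \<bar>real (card (V2 \<alpha> L n (m n) S)) - mu n\<bar>}"
        by (rule measure_pmf.finite_measure_mono) simp
      also have "\<dots> \<le> mu n / (\<epsilon>' * mu n / 4)\<^sup>2"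
        by (rule chebyshev_card_V2) (use \<epsilon>' elim in simp)
      also have "\<dots> = 16 / \<epsilon>'\<^sup>2 * inverse (mu n)"
        using elim \<epsilon>' by (simp add: field_simps power2_eq_square)
      finally show ?case .
    qed
    ultimately show "\<exists>b. b \<longlonglongrightarrow> 0 \<and>
        eventually (\<lambda>n. measure_pmf.prob (RIG n (m n) (P n)) {\<omega>. \<epsilon> < \<bar>\<xi> n \<omega>\<bar>} \<le> b n) sequentially"
      by auto
  qed
qed

definition clique_defect :: "nat \<Rightarrow> (nat \<Rightarrow> nat set) \<Rightarrow> real" where
  "clique_defect n S = (if card (V2 \<alpha> L n (m n) S) = 0 then 0
     else 1 - real (clique_number S (V2 \<alpha> L n (m n) S)) / real (card (V2 \<alpha> L n (m n) S)))"

lemma finite_V2: "finite (V2 \<alpha> L n (m n) S)"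
  unfolding V2_eq_heavy_vertices by (rule finite_heavy_vertices)

lemma clique_number_eq_card_V2_mult:
  "real (clique_number S (V2 \<alpha> L n (m n) S)) = real (card (V2 \<alpha> L n (m n) S)) * (1 - clique_defect n S)"
  using clique_number_le_card[OF finite_V2[of n S], of S]
  by (cases "card (V2 \<alpha> L n (m n) S) = 0") (simp_all add: clique_defect_def)

lemma large_clique_defect:
  assumes "0 < \<epsilon>" "0 < mu n" "\<epsilon> < \<bar>clique_defect n S\<bar>"
  shows "mu n / 2 \<le> \<bar>real (card (V2 \<alpha> L n (m n) S)) - mu n\<bar>
    \<or> \<epsilon> * mu n / 2 \<le> real (card (disjoint_pairs S (V2 \<alpha> L n (m n) S)))"
proof (rule ccontr)
  let ?X = "real (card (V2 \<alpha> L n (m n) S))"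
  let ?N = "real (card (disjoint_pairs S (V2 \<alpha> L n (m n) S)))"
  let ?\<omega> = "real (clique_number S (V2 \<alpha> L n (m n) S))"
  assume "\<not> ?thesis"
  then have "\<bar>?X - mu n\<bar> < mu n / 2" "?N < \<epsilon> * mu n / 2" by auto
  then have X: "mu n / 2 < ?X" and N: "?N < \<epsilon> * mu n / 2" unfolding abs_less_iff by linarith+
  have "?X - ?N \<le> ?\<omega>" "?\<omega> \<le> ?X"
    using card_le_clique_number_plus_disjoint_pairs[OF finite_V2[of n S], of S]
      clique_number_le_card[OF finite_V2[of n S], of S]
    by linarith+
  then have "\<bar>1 - ?\<omega> / ?X\<bar> \<le> \<epsilon>"
    using relative_clique_gap_le[OF _ _ X N assms(1,2)] by blast
  moreover have "?X \<noteq> 0" using X assms(2) by linarith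
  ultimately show False using assms(3) by (simp add: clique_defect_def)
qed

text \<open>The expected number of disjoint pairs in \<open>V\<^sub>2\<close> is \<open>o(\<mu>)\<close>, so Markov's inequality makes them
  negligible against \<open>|V\<^sub>2|\<close>.\<close>

lemma clique_number_V2_asymp:
  "\<exists>\<xi>. o_P (\<lambda>n. RIG n (m n) (P n)) \<xi> \<and>
     (\<forall>\<^sub>F n in sequentially. \<forall>S \<in> set_pmf (RIG n (m n) (P n)).
        real (clique_number S (V2 \<alpha> L n (m n) S)) = real (card (V2 \<alpha> L n (m n) S)) * (1 - \<xi> n S))"
proof (intro exI conjI)
  show "\<forall>\<^sub>F n in sequentially. \<forall>S \<in> set_pmf (RIG n (m n) (P n)).
      real (clique_number S (V2 \<alpha> L n (m n) S)) = real (card (V2 \<alpha> L n (m n) S)) * (1 - clique_defect n S)"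
    by (simp add: clique_number_eq_card_V2_mult)
  show "o_P (\<lambda>n. RIG n (m n) (P n)) clique_defect"
  proof (rule o_PI)
    fix \<epsilon> :: real assume \<epsilon>: "0 < \<epsilon>"
    let ?e = "\<lambda>n. exp (- (theta n)\<^sup>2 / real (m n))"
    have "(\<lambda>n. 4 * inverse (mu n) + 2 / \<epsilon> * (mu n * ?e n)) \<longlonglongrightarrow> 4 * 0 + 2 / \<epsilon> * 0"
      by (intro tendsto_add tendsto_mult tendsto_const tendsto_inverse_0_at_top mu_tendsto mu_exp_theta_tendsto)
    moreover have "eventually (\<lambda>n. measure_pmf.prob (RIG n (m n) (P n)) {S. \<epsilon> < \<bar>clique_defect n S\<bar>}
        \<le> 4 * inverse (mu n) + 2 / \<epsilon> * (mu n * ?e n)) sequentially"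
      using mu_tendsto[unfolded filterlim_at_top, rule_format, of 1] eventually_ge_at_top[of 1]
    proof eventually_elim
      case (elim n)
      let ?R = "RIG n (m n) (P n)"
      have "measure_pmf.prob ?R {S. \<epsilon> < \<bar>clique_defect n S\<bar>}
          \<le> measure_pmf.prob ?R ({S. mu n / 2 \<le> \<bar>real (card (V2 \<alpha> L n (m n) S)) - mu n\<bar>}
              \<union> {S. \<epsilon> * mu n / 2 \<le> real (card (disjoint_pairs S (V2 \<alpha> L n (m n) S)))})"
        using large_clique_defect[OF \<epsilon>, of n] elim by (intro measure_pmf.finite_measure_mono) auto
      also have "\<dots> \<le> measure_pmf.prob ?R {S. mu n / 2 \<le> \<bar>real (card (V2 \<alpha> L n (m n) S)) - mu n\<bar>}
          + measure_pmf.prob ?R {S. \<epsilon> * mu n / 2 \<le> real (card (disjoint_pairs S (V2 \<alpha> L n (m n) S)))}"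
        by (rule measure_Un_le) simp_all
      also have "\<dots> \<le> mu n / (mu n / 2)\<^sup>2 + (mu n)\<^sup>2 * ?e n / (\<epsilon> * mu n / 2)"
        using chebyshev_card_V2[of "mu n / 2" n] markov_disjoint_pairs_V2[of "\<epsilon> * mu n / 2" n] elim \<epsilon>
        by (intro add_mono) auto
      also have "\<dots> = 4 * inverse (mu n) + 2 / \<epsilon> * (mu n * ?e n)"
        using elim \<epsilon> by (simp add: field_simps power2_eq_square)
      finally show ?case .
    qed
    ultimately show "\<exists>b. b \<longlonglongrightarrow> 0 \<and> eventually (\<lambda>n. measure_pmf.prob (RIG n (m n) (P n))
        {S. \<epsilon> < \<bar>clique_defect n S\<bar>} \<le> b n) sequentially"
      by (intro exI conjI) auto
  qed
qed

end

text \<open>Condition (A), \<open>m \<rightarrow> \<infinity>\<close> and \<open>\<epsilon>\<^sub>1\<close> concern \<open>G\<^sub>0\<close> and \<open>G\<^sub>1\<close>.\<close>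

theorem mainTheorem6:
  fixes \<alpha> \<epsilon>0 \<epsilon>1 :: real and L :: "real \<Rightarrow> real"
    and m :: "nat \<Rightarrow> nat" and P :: "nat \<Rightarrow> nat pmf"
  assumes alpha: "1 < \<alpha>" "\<alpha> < 2"
    and eps0: "0 < \<epsilon>0" "\<epsilon>0 < 1/2"
    and eps1: "0 < \<epsilon>1" "\<epsilon>1 < \<epsilon>0"
    and m_pos: "\<And>n. m n \<ge> 1"
    and m_inf: "filterlim m at_top at_top"
    and P_supp: "\<And>n. set_pmf (P n) \<subseteq> {0..m n}"
    and L_sv: "slowly_varying L"
    and condA: "(\<lambda>n. measure_pmf.expectation (P n)
                     (\<lambda>k. sqrt (real n / real (m n)) * real k)) \<in> O(\<lambda>_. 1)"
    and condPL: "\<And>x :: nat \<Rightarrow> real.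
        (\<And>n. real n powr (1/2 - \<epsilon>0) \<le> x n \<and> x n \<le> real n powr (1/2 + \<epsilon>0)) \<Longrightarrow>
        (\<lambda>n. measure_pmf.prob (P n) {k. sqrt (real n / real (m n)) * real k \<ge> x n})
          \<sim>[sequentially] (\<lambda>n. L (x n) * x n powr (- \<alpha>))"
  shows "(\<exists>\<xi>. o_P (\<lambda>n. RIG n (m n) (P n)) \<xi> \<and>
            (\<forall>\<^sub>F n in sequentially. \<forall>S \<in> set_pmf (RIG n (m n) (P n)).
               real (clique_number S (V2 \<alpha> L n (m n) S))
                 = real (card (V2 \<alpha> L n (m n) S)) * (1 - \<xi> n S)))
       \<and> (\<exists>\<xi>. o_P (\<lambda>n. RIG n (m n) (P n)) \<xi> \<and>
            (\<forall>\<^sub>F n in sequentially. \<forall>S \<in> set_pmf (RIG n (m n) (P n)).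
               real (card (V2 \<alpha> L n (m n) S))
                 = (1 - \<xi> n S) * (1 - \<alpha>/2) powr (- \<alpha>/2) * K \<alpha> L n))"
proof -
  interpret power_law_rig \<alpha> \<epsilon>0 L m P
    using alpha eps0 m_pos P_supp L_sv condPL by unfold_locales auto
  show ?thesis using clique_number_V2_asymp card_V2_asymp by blast
qed

end
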